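(* Let $r,n$ be positive integers and $s=2$. For each integer $a$ with $0\le a\le r$, the number of valid lattice paths from $(0,0)$ to $(nr,2n)$ whose step sequence begins with $E^aN$ (i.e., exactly $a$ $E$-steps followed by an $N$-step) is $(r-a+1)\binom{r+2}{2}^{n-1}$.
   Context: A lattice path is a path in $\mathbb{Z}^2$ consisting of unit steps north ($N$-steps, adding $(0,1)$) and east ($E$-steps, adding $(1,0)$). For fixed positive integers $r,s$, points $v,w\in\mathbb{Z}^2$ are equivalent if $v-w=\ell(r,s)$ for some $\ell\in\mathbb{Z}$; $[v]$ denotes the class of $v$. A lattice path $P$ is valid if whenever $P$ enters a point $v$ with an $E$-step, every later point of $P$ in $[v]$ is also entered by an $E$-step. Here $s=2$. *)

theory Defs
  imports Main
begin

datatype step = E | N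

definition pt :: "step list \<Rightarrow> nat \<Rightarrow> int \<times> int" where
  "pt ps i = (int (length (filter (\<lambda>x. x = E) (take i ps))),
              int (length (filter (\<lambda>x. x = N) (take i ps))))"

definition equiv_pt :: "nat \<Rightarrow> nat \<Rightarrow> int \<times> int \<Rightarrow> int \<times> int \<Rightarrow> bool" where
  "equiv_pt r s v w \<longleftrightarrow> (\<exists>l::int. fst v - fst w = l * int r \<and> snd v - snd w = l * int s)"

text \<open>Point number i (1 \<le> i \<le> length ps) is entered by step ps ! (i-1).\<close>
definition valid :: "nat \<Rightarrow> nat \<Rightarrow> step list \<Rightarrow> bool" where
  "valid r s ps \<longleftrightarrow>
     (\<forall>i j. 1 \<le> i \<longrightarrow> i < j \<longrightarrow> j \<le> length ps \<longrightarrow> ps ! (i - 1) = E \<longrightarrow>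
        equiv_pt r s (pt ps j) (pt ps i) \<longrightarrow> ps ! (j - 1) = E)"

definition valid_paths :: "nat \<Rightarrow> nat \<Rightarrow> int \<times> int \<Rightarrow> step list set" where
  "valid_paths r s p = {ps. pt ps (length ps) = p \<and> valid r s ps}"

end

theory Submission
  imports Defs
begin

(* For s = 2 each class [v] has a unique representative ("cell") in the rows y = 0 and y = 1,
   so a path to (nr, 2n) is a closed walk on cells, and validity says that a cell once entered
   by an E-step is never again entered by an N-step.

   Let u and v be the leftmost cells of rows 0 and 1 entered by N-steps. Left of them every
   move is forced to be E, so inside the r + 2 cells (u,0), ..., (v,0), (v,1), ..., (u+r,1) the
   walk follows the loop word E^(v-u) N E^(u+r-v) N, and one shows that the last stretch of the
   walk inside these cells traverses the loop completely. Cutting out that traversal leaves a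
   valid walk Q with one loop fewer, from which the loop is recovered as (u, v).
   Conversely, a loop (g, b) can be spliced into Q at its last visit to the loop exactly when
   g and b do not exceed the leftmost landings of Q and Q visits the loop; these pairs form a
   set of size C(r+2, 2) whatever Q is. Splicing happens after the first N-step, so it keeps
   the initial segment E^a N, and the count follows by induction on n from the case of a
   single loop, where only the position of the second N-step is free. *)

lemma step_E_or_N: "x = E \<or> x = N"
  by (cases x) auto

lemma UNIV_step: "(UNIV :: step set) = {E, N}"
  using step_E_or_N by auto

lemma count_list_replicate: "count_list (replicate k y) x = (if y = x then k else 0)"
  by (induct k) auto

lemma count_list_rotate: "count_list (rotate k ys) x = count_list ys x"
proof (induct k)
  case (Suc k)
  then show ?case by (cases "rotate k ys") (auto simp: rotate1_hd_tl simp del: rotate1.simps)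
qed simp

lemma count_list_E_plus_N: "count_list ps E + count_list ps N = length ps"
  by (induct ps) (use step_E_or_N in auto)

lemma count_list_take_mono: "i \<le> j \<Longrightarrow> count_list (take i ps) x \<le> count_list (take j ps) x"
  by (metis count_list_append le_add1 le_add_diff_inverse take_add)

lemma count_list_take_le: "count_list (take i ps) x \<le> count_list ps x"
  by (metis append_take_drop_id count_list_append le_add1)

section \<open>Paths as walks on cells\<close>

definition cell :: "nat \<Rightarrow> int \<times> int \<Rightarrow> int \<times> int" where
  "cell r v = (fst v - int r * (snd v div 2), snd v mod 2)"

text \<open>An \<open>N\<close>-step from row \<open>1\<close> reaches row \<open>2\<close>, whose cells are those of row \<open>0\<close> shifted
  left by \<open>r\<close>.\<close>

definition move :: "nat \<Rightarrow> int \<times> int \<Rightarrow> step \<Rightarrow> int \<times> int" where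
  "move r c x = (case x of E \<Rightarrow> (fst c + 1, snd c)
      | N \<Rightarrow> (if snd c = 0 then (fst c, 1) else (fst c - int r, 0)))"

lemma move_E [simp]: "move r c E = (fst c + 1, snd c)"
  by (simp add: move_def)

lemma move_N [simp]: "move r c N = (if snd c = 0 then (fst c, 1) else (fst c - int r, 0))"
  by (simp add: move_def)

definition walk :: "nat \<Rightarrow> int \<times> int \<Rightarrow> step list \<Rightarrow> nat \<Rightarrow> int \<times> int" where
  "walk r c ps i = foldl (move r) c (take i ps)"

abbreviation pcell :: "nat \<Rightarrow> step list \<Rightarrow> nat \<Rightarrow> int \<times> int" where
  "pcell r ps i \<equiv> walk r (0, 0) ps i"

lemma walk_0 [simp]: "walk r c ps 0 = c"
  by (simp add: walk_def)

lemma walk_Suc: "i < length ps \<Longrightarrow> walk r c ps (Suc i) = move r (walk r c ps i) (ps ! i)"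
  by (simp add: walk_def take_Suc_conv_app_nth)

lemma walk_add: "walk r c ps (t + k) = walk r (walk r c ps t) (drop t ps) k"
  by (simp add: walk_def take_add)

lemma pcell_step:
  "1 \<le> i \<Longrightarrow> i \<le> length ps \<Longrightarrow> pcell r ps i = move r (pcell r ps (i - 1)) (ps ! (i - 1))"
  using walk_Suc[of "i - 1" ps r "(0, 0)"] by simp

lemma walk_row: "snd c \<in> {0, 1} \<Longrightarrow> snd (walk r c ps i) \<in> {0, 1}"
proof (induct i)
  case (Suc i)
  show ?case
  proof (cases "i < length ps")
    case True
    then show ?thesis using Suc step_E_or_N[of "ps ! i"] by (auto simp: walk_Suc)
  next
    case False
    then show ?thesis using Suc by (simp add: walk_def)
  qed
qed simp

lemma pcell_row: "snd (pcell r ps i) = 0 \<or> snd (pcell r ps i) = 1"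
  using walk_row[of "(0, 0)" r ps i] by auto

lemma pt_eq_count_list: "pt ps i = (int (count_list (take i ps) E), int (count_list (take i ps) N))"
proof -
  have "filter (\<lambda>y. y = x) xs = filter ((=) x) xs" for x :: step and xs
    by (metis (mono_tags, lifting))
  then show ?thesis by (simp add: pt_def count_list_eq_length_filter)
qed

lemma cell_pt: "i \<le> length ps \<Longrightarrow> cell r (pt ps i) = pcell r ps i"
proof (induct i)
  case 0
  then show ?case by (simp add: cell_def pt_def)
next
  case (Suc i)
  then have i: "i < length ps" by simp
  obtain x y where xy: "pt ps i = (x, y)" by (cases "pt ps i")
  have IH: "pcell r ps i = (x - int r * (y div 2), y mod 2)"
    using Suc xy by (simp add: cell_def)
  show ?case
  proof (cases "ps ! i")
    case E
    then have "pt ps (Suc i) = (x + 1, y)"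
      using i xy by (simp add: pt_eq_count_list take_Suc_conv_app_nth)
    then show ?thesis using IH E i by (simp add: walk_Suc cell_def)
  next
    case N
    then have "pt ps (Suc i) = (x, y + 1)"
      using i xy by (simp add: pt_eq_count_list take_Suc_conv_app_nth)
    moreover have "y mod 2 = 0 \<and> (y + 1) div 2 = y div 2 \<and> (y + 1) mod 2 = 1 \<or>
                   y mod 2 = 1 \<and> (y + 1) div 2 = y div 2 + 1 \<and> (y + 1) mod 2 = 0"
      by presburger
    ultimately show ?thesis using IH N i
      by (auto simp: walk_Suc cell_def algebra_simps)
  qed
qed

lemma equiv_pt_iff_cell_eq: "equiv_pt r 2 v w \<longleftrightarrow> cell r v = cell r w"
proof
  assume "equiv_pt r 2 v w"
  then obtain l :: int where l: "fst v - fst w = l * int r" "snd v = snd w + 2 * l"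
    unfolding equiv_pt_def by (auto simp: algebra_simps)
  then have "snd v div 2 = snd w div 2 + l" "snd v mod 2 = snd w mod 2" by presburger+
  then show "cell r v = cell r w" using l by (simp add: cell_def algebra_simps)
next
  assume h: "cell r v = cell r w"
  define l where "l = snd v div 2 - snd w div 2"
  have "snd v mod 2 = snd w mod 2" "fst v - int r * (snd v div 2) = fst w - int r * (snd w div 2)"
    using h by (auto simp: cell_def)
  then have "snd v - snd w = l * 2" "fst v - fst w = l * int r"
    unfolding l_def by (simp_all add: algebra_simps) presburger
  then show "equiv_pt r 2 v w" by (auto simp: equiv_pt_def)
qed

definition valid_walk :: "nat \<Rightarrow> step list \<Rightarrow> bool" where
  "valid_walk r ps \<longleftrightarrow> (\<forall>i j. 1 \<le> i \<longrightarrow> i < j \<longrightarrow> j \<le> length ps \<longrightarrow> ps ! (i - 1) = E \<longrightarrow>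
        pcell r ps j = pcell r ps i \<longrightarrow> ps ! (j - 1) = E)"

lemma valid_iff_valid_walk: "valid r 2 ps \<longleftrightarrow> valid_walk r ps"
  unfolding valid_def valid_walk_def
  by (simp add: equiv_pt_iff_cell_eq cell_pt cong: conj_cong imp_cong)


section \<open>Landings\<close>

definition landings :: "nat \<Rightarrow> step list \<Rightarrow> int \<Rightarrow> int set" where
  "landings r ps k = {p. \<exists>i. 1 \<le> i \<and> i \<le> length ps \<and> ps ! (i - 1) = N \<and> pcell r ps i = (p, k)}"

definition min_landing :: "nat \<Rightarrow> step list \<Rightarrow> int \<Rightarrow> int" where
  "min_landing r ps k = Min (landings r ps k)"

definition closed_walk :: "nat \<Rightarrow> step list \<Rightarrow> bool" where
  "closed_walk r ps \<longleftrightarrow> pcell r ps (length ps) = (0, 0) \<and> N \<in> set ps"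

lemma finite_landings: "finite (landings r ps k)"
proof -
  have "landings r ps k \<subseteq> (\<lambda>i. fst (pcell r ps i)) ` {1..length ps}"
    unfolding landings_def by force
  then show ?thesis by (rule finite_subset) simp
qed

lemma landingsI:
  "1 \<le> i \<Longrightarrow> i \<le> length ps \<Longrightarrow> ps ! (i - 1) = N \<Longrightarrow> pcell r ps i = (p, k) \<Longrightarrow>
   p \<in> landings r ps k"
  unfolding landings_def by blast

lemma landingsE:
  assumes "p \<in> landings r ps k"
  obtains i where "1 \<le> i" "i \<le> length ps" "ps ! (i - 1) = N" "pcell r ps i = (p, k)"
  using assms unfolding landings_def by blast

lemma pcell_E_run:
  assumes "\<And>j. i \<le> j \<Longrightarrow> j < k \<Longrightarrow> ps ! j = E" and "i \<le> k" and "k \<le> length ps"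
  shows "pcell r ps k = (fst (pcell r ps i) + int (k - i), snd (pcell r ps i))"
  using assms
proof (induct k)
  case (Suc k)
  show ?case
  proof (cases "i = Suc k")
    case False
    then have "i \<le> k" using Suc by simp
    then show ?thesis using Suc by (simp add: walk_Suc Suc_diff_le)
  qed simp
qed simp

lemma pcell_before_N_row1:
  "1 \<le> i \<Longrightarrow> i \<le> length ps \<Longrightarrow> ps ! (i - 1) = N \<Longrightarrow> pcell r ps i = (p, 1) \<Longrightarrow>
   pcell r ps (i - 1) = (p, 0)"
  using pcell_step[of i ps r] pcell_row[of r ps "i - 1"]
  by (cases "pcell r ps (i - 1)") (auto split: if_splits)

lemma pcell_before_N_row0:
  "1 \<le> i \<Longrightarrow> i \<le> length ps \<Longrightarrow> ps ! (i - 1) = N \<Longrightarrow> pcell r ps i = (p, 0) \<Longrightarrow>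
   pcell r ps (i - 1) = (p + int r, 1)"
  using pcell_step[of i ps r] pcell_row[of r ps "i - 1"]
  by (cases "pcell r ps (i - 1)") (auto split: if_splits)

lemma pcell_before_E:
  "1 \<le> i \<Longrightarrow> i \<le> length ps \<Longrightarrow> ps ! (i - 1) = E \<Longrightarrow> pcell r ps i = (p, k) \<Longrightarrow>
   pcell r ps (i - 1) = (p - 1, k)"
  using pcell_step[of i ps r] by (cases "pcell r ps (i - 1)") auto

lemma visited_ge_landing:
  "i \<le> length ps \<Longrightarrow>
   (snd (pcell r ps i) = 0 \<longrightarrow> 0 \<le> fst (pcell r ps i) \<or> (\<exists>q\<in>landings r ps 0. q \<le> fst (pcell r ps i))) \<and>
   (snd (pcell r ps i) = 1 \<longrightarrow> (\<exists>q\<in>landings r ps 1. q \<le> fst (pcell r ps i)))"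
proof (induct i)
  case (Suc i)
  then have i: "i < length ps" by simp
  show ?case
  proof (cases "ps ! i")
    case E
    obtain x y where xy: "pcell r ps i = (x, y)" by (cases "pcell r ps i")
    then have "pcell r ps (Suc i) = (x + 1, y)" using i E by (simp add: walk_Suc)
    moreover have "\<exists>q\<in>landings r ps k. q \<le> x + 1" if "\<exists>q\<in>landings r ps k. q \<le> x" for k
      using that by (meson add_increasing2 order.trans order_refl zero_le_one)
    moreover have "(y = 0 \<longrightarrow> 0 \<le> x \<or> (\<exists>q\<in>landings r ps 0. q \<le> x)) \<and>
        (y = 1 \<longrightarrow> (\<exists>q\<in>landings r ps 1. q \<le> x))"
      using Suc.hyps i xy by simp
    ultimately show ?thesis by auto
  next
    case N
    then have "fst (pcell r ps (Suc i)) \<in> landings r ps (snd (pcell r ps (Suc i)))"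
      using i by (intro landingsI[of "Suc i"]) auto
    then show ?thesis by auto
  qed
qed simp

lemma closed_walk_landing_le_0:
  assumes "closed_walk r ps"
  shows "\<exists>q\<in>landings r ps 0. q \<le> 0"
proof -
  let ?S = "{i. 1 \<le> i \<and> i \<le> length ps \<and> ps ! (i - 1) = N}"
  obtain i where "i < length ps" "ps ! i = N"
    using assms by (auto simp: closed_walk_def in_set_conv_nth)
  then have "Suc i \<in> ?S" by simp
  then have ne: "?S \<noteq> {}" by blast
  have fin: "finite ?S" by (rule finite_subset[of _ "{0..length ps}"]) auto
  have last: "Max ?S \<in> ?S" using Max_in[OF fin ne] .
  have after: "ps ! j = E" if "Max ?S \<le> j" "j < length ps" for j
  proof (rule ccontr)
    assume "ps ! j \<noteq> E"
    then have "Suc j \<in> ?S" using that step_E_or_N by auto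
    then have "Suc j \<le> Max ?S" using Max_ge[OF fin] by blast
    then show False using that by simp
  qed
  have "Max ?S \<le> length ps" using last by blast
  then have "pcell r ps (length ps) =
      (fst (pcell r ps (Max ?S)) + int (length ps - Max ?S), snd (pcell r ps (Max ?S)))"
    using pcell_E_run[OF after] by blast
  then have "pcell r ps (Max ?S) = (fst (pcell r ps (Max ?S)), 0)" "fst (pcell r ps (Max ?S)) \<le> 0"
    using assms unfolding closed_walk_def by (simp_all add: prod_eq_iff)
  moreover have "fst (pcell r ps (Max ?S)) \<in> landings r ps 0"
    using last calculation(1) by (intro landingsI[of "Max ?S"]) auto
  ultimately show ?thesis by blast
qed

lemma closed_walk_landings_1_nonempty:
  assumes "closed_walk r ps"
  shows "landings r ps 1 \<noteq> {}"
proof -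
  let ?S = "{i. i < length ps \<and> ps ! i = N}"
  have "?S \<noteq> {}" using assms by (auto simp: closed_walk_def in_set_conv_nth)
  then have first: "Min ?S \<in> ?S" by (intro Min_in) auto
  have before: "ps ! j = E" if "0 \<le> j" "j < Min ?S" for j
  proof (rule ccontr)
    assume "ps ! j \<noteq> E"
    then have "j \<in> ?S" using that first step_E_or_N[of "ps ! j"] by auto
    then have "Min ?S \<le> j" by (intro Min_le) auto
    then show False using that by simp
  qed
  have "Min ?S \<le> length ps" using first by simp
  then have "pcell r ps (Min ?S) = (int (Min ?S), 0)"
    using pcell_E_run[of 0 "Min ?S" ps r, OF before] by simp
  then have "pcell r ps (Suc (Min ?S)) = (int (Min ?S), 1)"
    using first by (simp add: walk_Suc)
  then have "int (Min ?S) \<in> landings r ps 1"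
    using first by (intro landingsI[of "Suc (Min ?S)"]) auto
  then show ?thesis by blast
qed

context
  fixes r :: nat and ps :: "step list"
  assumes closed: "closed_walk r ps"
begin

lemma min_landing_mem: "min_landing r ps k \<in> landings r ps k" if "k = 0 \<or> k = 1"
proof -
  have "landings r ps k \<noteq> {}"
    using that closed_walk_landing_le_0[OF closed] closed_walk_landings_1_nonempty[OF closed] by blast
  then show ?thesis unfolding min_landing_def using Min_in[OF finite_landings] by blast
qed

lemma min_landing_le: "q \<in> landings r ps k \<Longrightarrow> min_landing r ps k \<le> q"
  unfolding min_landing_def using Min_le[OF finite_landings] .

lemma min_landing_0_le_0: "min_landing r ps 0 \<le> 0"
  using closed_walk_landing_le_0[OF closed] min_landing_le by fastforce

lemma visited_row0_ge: "i \<le> length ps \<Longrightarrow> pcell r ps i = (p, 0) \<Longrightarrow> min_landing r ps 0 \<le> p"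
  using visited_ge_landing[of i ps r] min_landing_le min_landing_0_le_0 by fastforce

lemma visited_row1_ge: "i \<le> length ps \<Longrightarrow> pcell r ps i = (p, 1) \<Longrightarrow> min_landing r ps 1 \<le> p"
  using visited_ge_landing[of i ps r] min_landing_le by fastforce

lemma min_landing_bounds:
  "min_landing r ps 0 \<le> min_landing r ps 1" "min_landing r ps 1 \<le> min_landing r ps 0 + int r"
proof -
  obtain i where i: "1 \<le> i" "i \<le> length ps" "ps ! (i - 1) = N" "pcell r ps i = (min_landing r ps 1, 1)"
    using min_landing_mem[of 1] by (auto elim: landingsE)
  then show "min_landing r ps 0 \<le> min_landing r ps 1"
    using visited_row0_ge[of "i - 1"] pcell_before_N_row1 by simp
  obtain j where j: "1 \<le> j" "j \<le> length ps" "ps ! (j - 1) = N" "pcell r ps j = (min_landing r ps 0, 0)"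
    using min_landing_mem[of 0] by (auto elim: landingsE)
  then show "min_landing r ps 1 \<le> min_landing r ps 0 + int r"
    using visited_row1_ge[of "j - 1"] pcell_before_N_row0 by simp
qed

end


section \<open>Loops\<close>

text \<open>For \<open>g \<le> b \<le> g + r\<close> the \<open>r + 2\<close> cells \<open>(g,0), \<dots>, (b,0), (b,1), \<dots>, (g+r,1)\<close> form a
  closed walk, the loop \<open>(g, b)\<close>; \<open>loop_cell g b\<close> enumerates them in this order and
  \<open>loop_index g b\<close> inverts it.\<close>

definition in_loop :: "nat \<Rightarrow> int \<Rightarrow> int \<Rightarrow> int \<times> int \<Rightarrow> bool" where
  "in_loop r g b c \<longleftrightarrow>
     (snd c = 0 \<and> g \<le> fst c \<and> fst c \<le> b) \<or> (snd c = 1 \<and> b \<le> fst c \<and> fst c \<le> g + int r)"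

definition loop_word :: "nat \<Rightarrow> int \<Rightarrow> int \<Rightarrow> step list" where
  "loop_word r g b = replicate (nat (b - g)) E @ N # replicate (nat (g + int r - b)) E @ [N]"

definition loop_index :: "int \<Rightarrow> int \<Rightarrow> int \<times> int \<Rightarrow> nat" where
  "loop_index g b c = (if snd c = 0 then nat (fst c - g) else nat (b - g) + 1 + nat (fst c - b))"

definition loop_cell :: "int \<Rightarrow> int \<Rightarrow> nat \<Rightarrow> int \<times> int" where
  "loop_cell g b j = (if j \<le> nat (b - g) then (g + int j, 0) else (b + int j - (b - g) - 1, 1))"

definition loop_step :: "nat \<Rightarrow> int \<Rightarrow> int \<Rightarrow> int \<times> int \<Rightarrow> step" where
  "loop_step r g b c =
     (if snd c = 0 then (if fst c < b then E else N) else (if fst c < g + int r then E else N))"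

definition loop_word_from :: "nat \<Rightarrow> int \<Rightarrow> int \<Rightarrow> int \<times> int \<Rightarrow> step list" where
  "loop_word_from r g b c = rotate (loop_index g b c) (loop_word r g b)"

lemma in_loop_row0 [simp]: "in_loop r g b (x, 0) \<longleftrightarrow> g \<le> x \<and> x \<le> b"
  by (simp add: in_loop_def)

lemma in_loop_row1 [simp]: "in_loop r g b (x, 1) \<longleftrightarrow> b \<le> x \<and> x \<le> g + int r"
  by (simp add: in_loop_def)

lemma mod_Suc_pred: "1 \<le> (k::nat) \<Longrightarrow> Suc ((p + k - 1) mod L) mod L = (p + k) mod L"
  by (metis Suc_diff_le add_diff_cancel_left' le_add2 le_trans mod_Suc_eq plus_1_eq_Suc)

lemma exists_mod_eq: "(p::nat) < L \<Longrightarrow> j < L \<Longrightarrow> \<exists>k. 1 \<le> k \<and> k \<le> L \<and> (p + k - 1) mod L = j"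
proof (cases "p \<le> j")
  case True
  assume "j < L"
  then show ?thesis using True by (intro exI[of _ "j - p + 1"]) auto
next
  case False
  assume p: "p < L" and j: "j < L"
  have "(p + (L - p + j + 1) - 1) mod L = j" using p j by (simp add: algebra_simps)
  then show ?thesis using False p by (intro exI[of _ "L - p + j + 1"]) auto
qed

context
  fixes r :: nat and g b :: int
  assumes loop_bounds: "g \<le> b" "b \<le> g + int r"
begin

lemma loop_width: obtains D where "nat (b - g) = D" "int D = b - g" "D \<le> r"
  using loop_bounds by simp

lemma loop_cases:
  fixes j D :: nat
  assumes "j < r + 2" "D \<le> r"
  obtains "j < D" | "j = D" | "D < j" "j < r + 1" | "j = r + 1"
  using assms by linarith

lemma length_loop_word: "length (loop_word r g b) = r + 2"
  using loop_bounds by (simp add: loop_word_def)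

lemma loop_word_nth: "j < r + 2 \<Longrightarrow> loop_word r g b ! j = loop_step r g b (loop_cell g b j)"
proof -
  assume j: "j < r + 2"
  obtain D where D: "nat (b - g) = D" "int D = b - g" "D \<le> r" by (rule loop_width)
  have "nat (g + int r - b) = r - D" using D by linarith
  then have w: "loop_word r g b = replicate D E @ N # replicate (r - D) E @ [N]"
    using D(1) by (simp add: loop_word_def)
  from j D(3) show ?thesis
    by (cases rule: loop_cases)
      (use D in \<open>simp_all add: w nth_append nth_Cons' loop_cell_def loop_step_def\<close>)
qed

lemma in_loop_loop_cell: "j < r + 2 \<Longrightarrow> in_loop r g b (loop_cell g b j)"
  using loop_bounds by (auto simp: loop_cell_def in_loop_def)

lemma loop_index_loop_cell: "j < r + 2 \<Longrightarrow> loop_index g b (loop_cell g b j) = j"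
  using loop_bounds by (auto simp: loop_cell_def loop_index_def)

lemma loop_cell_loop_index:
  "in_loop r g b c \<Longrightarrow> loop_cell g b (loop_index g b c) = c \<and> loop_index g b c < r + 2"
  using loop_bounds by (cases c) (auto simp: loop_cell_def loop_index_def in_loop_def)

lemma loop_cell_inj: "i < r + 2 \<Longrightarrow> j < r + 2 \<Longrightarrow> loop_cell g b i = loop_cell g b j \<Longrightarrow> i = j"
  using loop_index_loop_cell by metis

lemma move_loop_cell:
  "j < r + 2 \<Longrightarrow> move r (loop_cell g b j) (loop_word r g b ! j) = loop_cell g b (Suc j mod (r + 2))"
proof -
  assume j: "j < r + 2"
  obtain D where D: "nat (b - g) = D" "int D = b - g" "D \<le> r" by (rule loop_width)
  from j D(3) show ?thesis
    by (cases rule: loop_cases) (use D in \<open>auto simp: loop_word_nth loop_cell_def loop_step_def\<close>)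
qed

lemma loop_word_N_target:
  "j < r + 2 \<Longrightarrow> loop_word r g b ! j = N \<Longrightarrow>
   loop_cell g b (Suc j mod (r + 2)) = (b, 1) \<or> loop_cell g b (Suc j mod (r + 2)) = (g, 0)"
proof -
  assume j: "j < r + 2" and "loop_word r g b ! j = N"
  obtain D where D: "nat (b - g) = D" "int D = b - g" "D \<le> r" by (rule loop_width)
  from j D(3) show ?thesis
    by (cases rule: loop_cases)
      (use D \<open>loop_word r g b ! j = N\<close> in \<open>auto simp: loop_word_nth loop_cell_def loop_step_def\<close>)
qed

lemma loop_word_N_targets:
  "\<exists>j < r + 2. loop_word r g b ! j = N \<and> loop_cell g b (Suc j mod (r + 2)) = (b, 1)"
  "\<exists>j < r + 2. loop_word r g b ! j = N \<and> loop_cell g b (Suc j mod (r + 2)) = (g, 0)"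
proof -
  obtain D where D: "nat (b - g) = D" "int D = b - g" "D \<le> r" by (rule loop_width)
  then show "\<exists>j < r + 2. loop_word r g b ! j = N \<and> loop_cell g b (Suc j mod (r + 2)) = (b, 1)"
    by (auto simp: loop_word_nth loop_cell_def loop_step_def intro!: exI[of _ D])
  show "\<exists>j < r + 2. loop_word r g b ! j = N \<and> loop_cell g b (Suc j mod (r + 2)) = (g, 0)"
    using D by (auto simp: loop_word_nth loop_cell_def loop_step_def intro!: exI[of _ "r + 1"])
qed

lemma loop_step_eq_nth: "in_loop r g b c \<Longrightarrow> loop_step r g b c = loop_word r g b ! loop_index g b c"
  using loop_word_nth loop_cell_loop_index by metis

lemma move_loop_step:
  "in_loop r g b c \<Longrightarrow> move r c (loop_step r g b c) = loop_cell g b (Suc (loop_index g b c) mod (r + 2))"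
  using move_loop_cell loop_cell_loop_index loop_step_eq_nth by metis

lemma length_loop_word_from: "length (loop_word_from r g b c) = r + 2"
  by (simp add: loop_word_from_def length_loop_word)

lemma loop_word_from_nth:
  "k < r + 2 \<Longrightarrow> loop_word_from r g b c ! k = loop_word r g b ! ((loop_index g b c + k) mod (r + 2))"
  by (simp add: loop_word_from_def nth_rotate length_loop_word add.commute)

lemma count_list_loop_word_from:
  "count_list (loop_word_from r g b c) E = r" "count_list (loop_word_from r g b c) N = 2"
  using loop_bounds by (simp_all add: loop_word_from_def count_list_rotate loop_word_def count_list_replicate)

lemma walk_loop_word_from:
  "in_loop r g b c \<Longrightarrow> k \<le> r + 2 \<Longrightarrow>
   walk r c (loop_word_from r g b c) k = loop_cell g b ((loop_index g b c + k) mod (r + 2))"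
proof (induct k)
  case 0
  then show ?case using loop_cell_loop_index by simp
next
  case (Suc k)
  let ?i = "(loop_index g b c + k) mod (r + 2)"
  have "walk r c (loop_word_from r g b c) (Suc k) =
      move r (loop_cell g b ?i) (loop_word r g b ! ?i)"
    using Suc by (simp add: walk_Suc length_loop_word_from loop_word_from_nth)
  also have "\<dots> = loop_cell g b (Suc ?i mod (r + 2))"
    by (simp add: move_loop_cell)
  finally show ?case by (simp add: mod_Suc_eq)
qed

lemma walk_loop_word_from_closed: "in_loop r g b c \<Longrightarrow> walk r c (loop_word_from r g b c) (r + 2) = c"
  using walk_loop_word_from[of c "r + 2"] loop_cell_loop_index[of c]
  by (simp del: add_2_eq_Suc' add_2_eq_Suc)

lemma in_loop_walk_loop_word_from:
  "in_loop r g b c \<Longrightarrow> k \<le> r + 2 \<Longrightarrow> in_loop r g b (walk r c (loop_word_from r g b c) k)"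
  using walk_loop_word_from in_loop_loop_cell by simp

lemma walk_loop_word_from_N_target:
  assumes c: "in_loop r g b c" and k: "1 \<le> k" "k \<le> r + 2" and "loop_word_from r g b c ! (k - 1) = N"
  shows "walk r c (loop_word_from r g b c) k = (b, 1) \<or> walk r c (loop_word_from r g b c) k = (g, 0)"
proof -
  let ?j = "(loop_index g b c + k - 1) mod (r + 2)"
  have "loop_word r g b ! ?j = N"
    using assms loop_word_from_nth[of "k - 1" c] by simp
  then show ?thesis
    using loop_word_N_target[of ?j] walk_loop_word_from[OF c k(2)] mod_Suc_pred[OF k(1)] by simp
qed

lemma loop_word_from_lands:
  assumes c: "in_loop r g b c" and target: "target = (b, 1) \<or> target = (g, 0)"
  shows "\<exists>k. 1 \<le> k \<and> k \<le> r + 2 \<and> loop_word_from r g b c ! (k - 1) = N \<and>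
             walk r c (loop_word_from r g b c) k = target"
proof -
  have p: "loop_index g b c < r + 2" using loop_cell_loop_index[OF c] by simp
  obtain j where j: "j < r + 2" "loop_word r g b ! j = N" "loop_cell g b (Suc j mod (r + 2)) = target"
    using loop_word_N_targets target by blast
  obtain k where k: "1 \<le> k" "k \<le> r + 2" "(loop_index g b c + k - 1) mod (r + 2) = j"
    using exists_mod_eq[OF p j(1)] by blast
  show ?thesis
    using j k loop_word_from_nth[of "k - 1" c] walk_loop_word_from[OF c k(2)]
      mod_Suc_pred[OF k(1), of "loop_index g b c" "r + 2"]
    by (intro exI[of _ k]) auto
qed

lemma walk_loop_word_from_distinct:
  assumes c: "in_loop r g b c" and k: "k < k'" "k' \<le> r + 2" "1 \<le> k"
  shows "walk r c (loop_word_from r g b c) k \<noteq> walk r c (loop_word_from r g b c) k'"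
proof
  let ?p = "loop_index g b c"
  assume "walk r c (loop_word_from r g b c) k = walk r c (loop_word_from r g b c) k'"
  then have "(?p + k) mod (r + 2) = (?p + k') mod (r + 2)"
    using walk_loop_word_from[OF c] loop_cell_inj k by simp
  then have "(r + 2) dvd (k' - k)"
    using mod_eq_dvd_iff_nat[of "?p + k" "?p + k'" "r + 2"] k by simp
  moreover have "0 < k' - k" "k' - k < r + 2" using k by auto
  ultimately show False using nat_dvd_not_less by blast
qed

end


section \<open>Inserting closed subwalks\<close>

definition insert_at :: "nat \<Rightarrow> 'a list \<Rightarrow> 'a list \<Rightarrow> 'a list" where
  "insert_at t w Q = take t Q @ w @ drop t Q"

text \<open>Position \<open>k\<close> of \<open>Q\<close> becomes position \<open>shift_past t L k\<close> after inserting \<open>L\<close> letters at \<open>t\<close>.\<close>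

definition shift_past :: "nat \<Rightarrow> nat \<Rightarrow> nat \<Rightarrow> nat" where
  "shift_past t L k = (if k \<le> t then k else k + L)"

lemma length_insert_at: "t \<le> length Q \<Longrightarrow> length (insert_at t w Q) = length Q + length w"
  by (simp add: insert_at_def)

lemma count_list_insert_at: "count_list (insert_at t w Q) x = count_list Q x + count_list w x"
  by (metis add.commute append_take_drop_id count_list_append insert_at_def add.left_commute)

lemma take_insert_at: "t \<le> length Q \<Longrightarrow> take t (insert_at t w Q) = take t Q"
  by (simp add: insert_at_def)

lemma walk_insert_at:
  assumes t: "t \<le> length Q" and closed: "walk r (walk r c Q t) w (length w) = walk r c Q t"
  shows "walk r c (insert_at t w Q) i =
     (if i \<le> t then walk r c Q i
      else if i \<le> t + length w then walk r (walk r c Q t) w (i - t)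
      else walk r c Q (i - length w))"
proof -
  have "walk r c (insert_at t w Q) i = walk r c Q (t + (i - t - length w))"
    if "t + length w < i"
  proof -
    have "take i (insert_at t w Q) = take t Q @ w @ take (i - t - length w) (drop t Q)"
      using t that by (simp add: insert_at_def)
    then show ?thesis
      using closed walk_add[of r c Q t] by (simp add: walk_def)
  qed
  moreover have "take i (insert_at t w Q) = take i Q" if "i \<le> t"
    using t that by (simp add: insert_at_def)
  moreover have "take i (insert_at t w Q) = take t Q @ take (i - t) w" if "t < i" "i \<le> t + length w"
    using t that by (simp add: insert_at_def)
  ultimately show ?thesis by (auto simp: walk_def)
qed

lemma insert_at_nth:
  assumes t: "t \<le> length Q" and i: "1 \<le> i" "i \<le> length Q + length w"
  shows "insert_at t w Q ! (i - 1) =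
     (if i \<le> t then Q ! (i - 1)
      else if i \<le> t + length w then w ! (i - 1 - t)
      else Q ! (i - 1 - length w))"
proof (cases "i \<le> t")
  case True
  then have "i - 1 < t" using i by simp
  then show ?thesis using True t by (simp add: insert_at_def nth_append)
next
  case False
  then have "\<not> i - 1 < t" using i by simp
  then have "insert_at t w Q ! (i - 1) = (w @ drop t Q) ! (i - 1 - t)"
    using t by (simp add: insert_at_def nth_append)
  moreover have "(w @ drop t Q) ! (i - 1 - t) = Q ! (i - 1 - length w)" if "t + length w < i"
  proof -
    have "\<not> i - 1 - t < length w" using that by simp
    then have "(w @ drop t Q) ! (i - 1 - t) = drop t Q ! (i - 1 - t - length w)"
      by (simp add: nth_append)
    also have "\<dots> = Q ! (t + (i - 1 - t - length w))"
      using t i that by simp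
    also have "t + (i - 1 - t - length w) = i - 1 - length w" using that by simp
    finally show ?thesis .
  qed
  ultimately show ?thesis using False by (auto simp: nth_append)
qed

context
  fixes r :: nat and t :: nat and w Q :: "step list"
  assumes t: "t \<le> length Q" and closed: "walk r (pcell r Q t) w (length w) = pcell r Q t"
begin

lemma insert_at_shift_past:
  assumes "1 \<le> k" "k \<le> length Q"
  shows "insert_at t w Q ! (shift_past t (length w) k - 1) = Q ! (k - 1)"
proof -
  have "1 \<le> shift_past t (length w) k" "shift_past t (length w) k \<le> length Q + length w"
    using assms by (auto simp: shift_past_def)
  from insert_at_nth[OF t this] show ?thesis using assms by (auto simp: shift_past_def)
qed

lemma pcell_insert_at_shift_past:
  "pcell r (insert_at t w Q) (shift_past t (length w) k) = pcell r Q k"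
  using walk_insert_at[OF t closed, of "shift_past t (length w) k"] by (auto simp: shift_past_def)

lemma shift_past_cases [consumes 1, case_names shifted inside]:
  assumes "k \<le> length Q + length w"
  obtains k' where "k = shift_past t (length w) k'" "k' \<le> length Q" "1 \<le> k \<Longrightarrow> 1 \<le> k'"
  | "t < k" "k \<le> t + length w"
proof (cases "k \<le> t")
  case True
  then show ?thesis using assms t that(1)[of k] by (simp add: shift_past_def)
next
  case False
  then show ?thesis
    using assms that(2) that(1)[of "k - length w"] by (cases "k \<le> t + length w") (auto simp: shift_past_def)
qed

lemma valid_walk_remove: "valid_walk r (insert_at t w Q) \<Longrightarrow> valid_walk r Q"
  unfolding valid_walk_def
proof (intro allI impI)
  fix i j
  assume v: "\<forall>i j. 1 \<le> i \<longrightarrow> i < j \<longrightarrow> j \<le> length (insert_at t w Q) \<longrightarrow>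
      insert_at t w Q ! (i - 1) = E \<longrightarrow> pcell r (insert_at t w Q) j = pcell r (insert_at t w Q) i \<longrightarrow>
      insert_at t w Q ! (j - 1) = E"
    and ij: "1 \<le> i" "i < j" "j \<le> length Q" "Q ! (i - 1) = E" "pcell r Q j = pcell r Q i"
  let ?f = "shift_past t (length w)"
  have "1 \<le> ?f i" "?f i < ?f j" "?f j \<le> length (insert_at t w Q)"
    using ij length_insert_at[OF t] by (auto simp: shift_past_def)
  with v have "insert_at t w Q ! (?f j - 1) = E"
    using ij insert_at_shift_past[of i] pcell_insert_at_shift_past by simp
  then show "Q ! (j - 1) = E" using insert_at_shift_past[of j] ij by simp
qed

lemma insert_at_inside:
  assumes "t < k" "k \<le> t + length w"
  shows "insert_at t w Q ! (k - 1) = w ! (k - t - 1)"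
    and "pcell r (insert_at t w Q) k = walk r (pcell r Q t) w (k - t)"
  using assms t insert_at_nth[OF t, of k w] walk_insert_at[OF t closed, of k] by auto

lemma valid_walk_insert_reentry_shifted:
  assumes valid: "valid_walk r Q"
    and after: "\<And>k j. 1 \<le> k \<Longrightarrow> k \<le> length w \<Longrightarrow> t < j \<Longrightarrow> j \<le> length Q \<Longrightarrow>
               pcell r Q j \<noteq> walk r (pcell r Q t) w k"
    and ij: "1 \<le> i" "i < j" "insert_at t w Q ! (i - 1) = E"
      "pcell r (insert_at t w Q) j = pcell r (insert_at t w Q) i"
    and j: "j = shift_past t (length w) j'" "j' \<le> length Q"
  shows "insert_at t w Q ! (j - 1) = E"
proof -
  have "i \<le> length Q + length w" using ij j by (auto simp: shift_past_def split: if_splits)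
  then show ?thesis
  proof (cases rule: shift_past_cases)
    case (shifted i')
    then have "i' < j'" "1 \<le> i'" "1 \<le> j'" using j ij by (auto simp: shift_past_def split: if_splits)
    then show ?thesis
      using valid ij shifted j insert_at_shift_past pcell_insert_at_shift_past
      unfolding valid_walk_def by metis
  next
    case inside
    then have "pcell r Q j' \<noteq> pcell r (insert_at t w Q) i"
      using after[of "i - t" j'] insert_at_inside(2) j ij by (auto simp: shift_past_def split: if_splits)
    then show ?thesis using ij j pcell_insert_at_shift_past by simp
  qed
qed

lemma valid_walk_insert_reentry_inside:
  assumes before: "\<And>k i. 1 \<le> k \<Longrightarrow> k \<le> length w \<Longrightarrow> w ! (k - 1) = N \<Longrightarrow> 1 \<le> i \<Longrightarrow> i \<le> t \<Longrightarrow>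
               pcell r Q i = walk r (pcell r Q t) w k \<Longrightarrow> Q ! (i - 1) = N"
    and distinct: "\<And>k k'. 1 \<le> k \<Longrightarrow> k < k' \<Longrightarrow> k' \<le> length w \<Longrightarrow>
               walk r (pcell r Q t) w k \<noteq> walk r (pcell r Q t) w k'"
    and ij: "1 \<le> i" "i < j" "insert_at t w Q ! (i - 1) = E"
      "pcell r (insert_at t w Q) j = pcell r (insert_at t w Q) i"
    and j: "t < j" "j \<le> t + length w"
  shows "insert_at t w Q ! (j - 1) = E"
proof (cases "t < i")
  case True
  then have "1 \<le> i - t" "i - t < j - t" "j - t \<le> length w" using ij j by auto
  then show ?thesis using distinct[of "i - t" "j - t"] insert_at_inside(2) True ij j by auto
next
  case False
  show ?thesis
  proof (rule ccontr)
    assume "insert_at t w Q ! (j - 1) \<noteq> E"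
    then have "w ! (j - t - 1) = N" using insert_at_inside(1) j step_E_or_N by metis
    then have "Q ! (i - 1) = N"
      using before[of "j - t" i] ij j False insert_at_inside(2) walk_insert_at[OF t closed, of i] by auto
    then show False using ij j False t insert_at_nth[OF t, of i w] by auto
  qed
qed

lemma valid_walk_insert:
  assumes valid: "valid_walk r Q"
    and before: "\<And>k i. 1 \<le> k \<Longrightarrow> k \<le> length w \<Longrightarrow> w ! (k - 1) = N \<Longrightarrow> 1 \<le> i \<Longrightarrow> i \<le> t \<Longrightarrow>
               pcell r Q i = walk r (pcell r Q t) w k \<Longrightarrow> Q ! (i - 1) = N"
    and after: "\<And>k j. 1 \<le> k \<Longrightarrow> k \<le> length w \<Longrightarrow> t < j \<Longrightarrow> j \<le> length Q \<Longrightarrow>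
               pcell r Q j \<noteq> walk r (pcell r Q t) w k"
    and distinct: "\<And>k k'. 1 \<le> k \<Longrightarrow> k < k' \<Longrightarrow> k' \<le> length w \<Longrightarrow>
               walk r (pcell r Q t) w k \<noteq> walk r (pcell r Q t) w k'"
  shows "valid_walk r (insert_at t w Q)"
  unfolding valid_walk_def
proof (intro allI impI)
  fix i j
  assume ij: "1 \<le> i" "i < j" "j \<le> length (insert_at t w Q)" "insert_at t w Q ! (i - 1) = E"
    "pcell r (insert_at t w Q) j = pcell r (insert_at t w Q) i"
  from ij(3) have "j \<le> length Q + length w" using length_insert_at[OF t] by simp
  then show "insert_at t w Q ! (j - 1) = E"
  proof (cases rule: shift_past_cases)
    case (shifted j')
    from valid after ij(1,2,4,5) shifted(1,2) show ?thesis by (rule valid_walk_insert_reentry_shifted)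
  next
    case inside
    with before distinct ij(1,2,4,5) show ?thesis by (rule valid_walk_insert_reentry_inside)
  qed
qed

end


section \<open>Inserting a loop\<close>

definition valid_walks :: "nat \<Rightarrow> nat \<Rightarrow> step list set" where
  "valid_walks r m = {ps. count_list ps E = m * r \<and> count_list ps N = 2 * m \<and> valid_walk r ps}"

lemma valid_paths_eq_valid_walks: "valid_paths r 2 (int (m * r), int (2 * m)) = valid_walks r m"
proof -
  have "pt ps (length ps) = (int (m * r), int (2 * m)) \<longleftrightarrow>
      count_list ps E = m * r \<and> count_list ps N = 2 * m" for ps
    unfolding pt_eq_count_list by (simp only: take_all order_refl prod.inject of_nat_eq_iff)
  then show ?thesis
    unfolding valid_paths_def valid_walks_def using valid_iff_valid_walk by auto
qed

lemma valid_walks_closed: "ps \<in> valid_walks r m \<Longrightarrow> m \<ge> 1 \<Longrightarrow> closed_walk r ps"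
proof -
  assume ps: "ps \<in> valid_walks r m" and m: "m \<ge> 1"
  have "pcell r ps (length ps) = cell r (pt ps (length ps))" using cell_pt by simp
  also have "\<dots> = (0, 0)" using ps by (simp add: valid_walks_def pt_eq_count_list cell_def)
  moreover have "count_list ps N \<noteq> 0" using ps m by (simp add: valid_walks_def)
  ultimately show ?thesis by (simp add: closed_walk_def count_list_0_iff)
qed

definition admissible_loops :: "nat \<Rightarrow> step list \<Rightarrow> (int \<times> int) set" where
  "admissible_loops r Q = {(g, b). g \<le> min_landing r Q 0 \<and> b \<le> min_landing r Q 1 \<and>
     g \<le> b \<and> b \<le> g + int r \<and> (\<exists>i \<le> length Q. in_loop r g b (pcell r Q i))}"

definition last_visit :: "nat \<Rightarrow> step list \<Rightarrow> int \<Rightarrow> int \<Rightarrow> nat" where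
  "last_visit r P g b = Max {i. i \<le> length P \<and> in_loop r g b (pcell r P i)}"

definition insert_loop :: "nat \<Rightarrow> step list \<Rightarrow> int \<Rightarrow> int \<Rightarrow> step list" where
  "insert_loop r Q g b =
     insert_at (last_visit r Q g b) (loop_word_from r g b (pcell r Q (last_visit r Q g b))) Q"

definition remove_loop :: "nat \<Rightarrow> step list \<Rightarrow> step list \<times> (int \<times> int)" where
  "remove_loop r P =
     (let g = min_landing r P 0; b = min_landing r P 1; s = last_visit r P g b
      in (take (s - (r + 2)) P @ drop s P, (g, b)))"

context
  fixes r :: nat and P :: "step list" and g b :: int
  assumes visited: "\<exists>i \<le> length P. in_loop r g b (pcell r P i)"
begin

lemma finite_visits: "finite {i. i \<le> length P \<and> in_loop r g b (pcell r P i)}"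
  by (rule finite_subset[of _ "{..length P}"]) auto

lemma last_visit_mem: "last_visit r P g b \<le> length P \<and> in_loop r g b (pcell r P (last_visit r P g b))"
proof -
  have "{i. i \<le> length P \<and> in_loop r g b (pcell r P i)} \<noteq> {}" using visited by blast
  from Max_in[OF finite_visits this] show ?thesis unfolding last_visit_def by blast
qed

lemma last_visit_ge: "j \<le> length P \<Longrightarrow> in_loop r g b (pcell r P j) \<Longrightarrow> j \<le> last_visit r P g b"
  unfolding last_visit_def by (rule Max_ge[OF finite_visits]) blast

end

lemma last_visit_eqI:
  assumes "t \<le> length P" "in_loop r g b (pcell r P t)"
    and "\<And>j. j \<le> length P \<Longrightarrow> t < j \<Longrightarrow> \<not> in_loop r g b (pcell r P j)"
  shows "last_visit r P g b = t"
proof -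
  have visited: "\<exists>i \<le> length P. in_loop r g b (pcell r P i)" using assms(1,2) by blast
  show ?thesis
  proof (rule antisym)
    show "t \<le> last_visit r P g b" using last_visit_ge[OF visited assms(1,2)] .
    show "last_visit r P g b \<le> t" using assms(3) last_visit_mem[OF visited] by (meson not_le)
  qed
qed

context
  fixes r :: nat and Q :: "step list" and g b :: int
  assumes valid: "valid_walk r Q" and closed: "closed_walk r Q"
    and admissible: "(g, b) \<in> admissible_loops r Q"
begin

abbreviation "ins_time \<equiv> last_visit r Q g b"
abbreviation "ins_word \<equiv> loop_word_from r g b (pcell r Q ins_time)"

lemma admissibleD:
  "g \<le> min_landing r Q 0" "b \<le> min_landing r Q 1" "g \<le> b" "b \<le> g + int r"
  "\<exists>i \<le> length Q. in_loop r g b (pcell r Q i)"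
  using admissible by (auto simp: admissible_loops_def)

lemma insertion_point:
  "ins_time \<le> length Q" "in_loop r g b (pcell r Q ins_time)"
  "\<And>j. j \<le> length Q \<Longrightarrow> ins_time < j \<Longrightarrow> \<not> in_loop r g b (pcell r Q j)"
proof -
  show "ins_time \<le> length Q" "in_loop r g b (pcell r Q ins_time)"
    using last_visit_mem[OF admissibleD(5)] by blast+
  show "\<And>j. j \<le> length Q \<Longrightarrow> ins_time < j \<Longrightarrow> \<not> in_loop r g b (pcell r Q j)"
    using last_visit_ge[OF admissibleD(5)] by (meson not_le)
qed

lemma length_ins_word: "length ins_word = r + 2"
  using length_loop_word_from[OF admissibleD(3,4)] .

lemma ins_word_closed: "walk r (pcell r Q ins_time) ins_word (length ins_word) = pcell r Q ins_time"
  using walk_loop_word_from_closed[OF admissibleD(3,4) insertion_point(2)] length_ins_word by simp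

lemma length_insert_loop: "length (insert_loop r Q g b) = length Q + (r + 2)"
  unfolding insert_loop_def using length_insert_at[OF insertion_point(1)] length_ins_word by simp

lemma pcell_insert_loop:
  "pcell r (insert_loop r Q g b) i =
     (if i \<le> ins_time then pcell r Q i
      else if i \<le> ins_time + (r + 2) then walk r (pcell r Q ins_time) ins_word (i - ins_time)
      else pcell r Q (i - (r + 2)))"
  unfolding insert_loop_def
  using walk_insert_at[OF insertion_point(1) ins_word_closed] length_ins_word by simp

lemma insert_loop_nth:
  "1 \<le> i \<Longrightarrow> i \<le> length Q + (r + 2) \<Longrightarrow> insert_loop r Q g b ! (i - 1) =
     (if i \<le> ins_time then Q ! (i - 1)
      else if i \<le> ins_time + (r + 2) then ins_word ! (i - 1 - ins_time)
      else Q ! (i - 1 - (r + 2)))"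
  unfolding insert_loop_def
  using insert_at_nth[OF insertion_point(1), of i ins_word] length_ins_word by simp

lemma count_list_insert_loop:
  "count_list (insert_loop r Q g b) E = count_list Q E + r"
  "count_list (insert_loop r Q g b) N = count_list Q N + 2"
  unfolding insert_loop_def count_list_insert_at
  using count_list_loop_word_from[OF admissibleD(3,4)] by auto

text \<open>Since \<open>g\<close> and \<open>b\<close> do not exceed the minimal landings, the two cells \<open>(g,0)\<close> and \<open>(b,1)\<close> where
  the loop turns cannot have been entered by an \<open>E\<close>-step of \<open>Q\<close>.\<close>

lemma valid_walk_insert_loop: "valid_walk r (insert_loop r Q g b)"
  unfolding insert_loop_def
proof (rule valid_walk_insert[OF insertion_point(1) ins_word_closed valid])
  fix k i
  assume k: "1 \<le> k" "k \<le> length ins_word" "ins_word ! (k - 1) = N" and i: "1 \<le> i" "i \<le> ins_time"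
    and same: "pcell r Q i = walk r (pcell r Q ins_time) ins_word k"
  have iQ: "i \<le> length Q" using i insertion_point(1) by simp
  show "Q ! (i - 1) = N"
  proof (rule ccontr)
    assume "Q ! (i - 1) \<noteq> N"
    then have QE: "Q ! (i - 1) = E" using step_E_or_N by auto
    from walk_loop_word_from_N_target[OF admissibleD(3,4) insertion_point(2)] k length_ins_word
    consider "pcell r Q i = (b, 1)" | "pcell r Q i = (g, 0)" using same by auto
    then show False
    proof cases
      case 1
      then have "pcell r Q (i - 1) = (b - 1, 1)" using pcell_before_E[OF i(1) iQ QE] by simp
      then show False using visited_row1_ge[OF closed, of "i - 1"] iQ admissibleD(2) by fastforce
    next
      case 2
      then have "pcell r Q (i - 1) = (g - 1, 0)" using pcell_before_E[OF i(1) iQ QE] by simp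
      then show False using visited_row0_ge[OF closed, of "i - 1"] iQ admissibleD(1) by fastforce
    qed
  qed
next
  fix k j
  assume "1 \<le> k" "k \<le> length ins_word" "ins_time < j" "j \<le> length Q"
  moreover from this have "in_loop r g b (walk r (pcell r Q ins_time) ins_word k)"
    using in_loop_walk_loop_word_from[OF admissibleD(3,4) insertion_point(2), of k] length_ins_word by simp
  ultimately show "pcell r Q j \<noteq> walk r (pcell r Q ins_time) ins_word k"
    using insertion_point(3) by metis
next
  fix k k'
  assume "1 \<le> k" "k < k'" "k' \<le> length ins_word"
  then show "walk r (pcell r Q ins_time) ins_word k \<noteq> walk r (pcell r Q ins_time) ins_word k'"
    using walk_loop_word_from_distinct[OF admissibleD(3,4) insertion_point(2)] length_ins_word by simp
qed

lemma take_insert_loop: "take ins_time (insert_loop r Q g b) = take ins_time Q"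
  unfolding insert_loop_def using take_insert_at[OF insertion_point(1)] .

lemma N_before_insertion: "\<exists>i. 1 \<le> i \<and> i \<le> ins_time \<and> Q ! (i - 1) = N"
proof -
  obtain i where i: "i \<le> length Q" "in_loop r g b (pcell r Q i)" using admissibleD(5) by blast
  have "\<exists>k. (k = 0 \<or> k = 1) \<and> in_loop r g b (min_landing r Q k, k)"
  proof (cases "snd (pcell r Q i) = 0")
    case True
    then have "min_landing r Q 0 \<le> fst (pcell r Q i)" "fst (pcell r Q i) \<le> b"
      using visited_row0_ge[OF closed i(1), of "fst (pcell r Q i)"] i(2)
      by (auto simp: in_loop_def prod_eq_iff)
    then show ?thesis using admissibleD by (intro exI[of _ 0]) simp
  next
    case False
    then have "snd (pcell r Q i) = 1" using pcell_row by metis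
    then have "min_landing r Q 1 \<le> fst (pcell r Q i)" "fst (pcell r Q i) \<le> g + int r"
      using visited_row1_ge[OF closed i(1), of "fst (pcell r Q i)"] i(2)
      by (auto simp: in_loop_def prod_eq_iff)
    then show ?thesis using admissibleD by (intro exI[of _ 1]) simp
  qed
  then obtain k where k: "k = 0 \<or> k = 1" "in_loop r g b (min_landing r Q k, k)" by blast
  obtain j where j: "1 \<le> j" "j \<le> length Q" "Q ! (j - 1) = N" "pcell r Q j = (min_landing r Q k, k)"
    using min_landing_mem[OF closed k(1)] by (rule landingsE)
  have "j \<le> ins_time" using insertion_point(3)[OF j(2)] j(4) k(2) by (metis not_le)
  then show ?thesis using j by blast
qed

lemma landings_insert_loop:
  assumes "q \<in> landings r (insert_loop r Q g b) k"
  shows "q \<in> landings r Q k \<or> (q, k) = (b, 1) \<or> (q, k) = (g, 0)"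
proof -
  obtain i where i: "1 \<le> i" "i \<le> length Q + length ins_word" "insert_loop r Q g b ! (i - 1) = N"
    "pcell r (insert_loop r Q g b) i = (q, k)"
    using assms length_insert_loop length_ins_word by (auto elim: landingsE)
  from i(2) show ?thesis
  proof (cases rule: shift_past_cases[OF insertion_point(1) ins_word_closed,
        consumes 1, case_names shifted inside])
    case (shifted i')
    then show ?thesis
      using i insert_at_shift_past[OF insertion_point(1) ins_word_closed, of i']
        pcell_insert_at_shift_past[OF insertion_point(1) ins_word_closed, of i']
      unfolding insert_loop_def by (auto intro: landingsI)
  next
    case inside
    then have "1 \<le> i - ins_time" "i - ins_time \<le> r + 2" "ins_word ! (i - ins_time - 1) = N"
      using i insert_loop_nth[of i] length_ins_word by auto
    from walk_loop_word_from_N_target[OF admissibleD(3,4) insertion_point(2) this]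
    show ?thesis using pcell_insert_loop[of i] inside i(4) length_ins_word by auto
  qed
qed

lemma loop_landings_insert_loop:
  "g \<in> landings r (insert_loop r Q g b) 0" "b \<in> landings r (insert_loop r Q g b) 1"
proof -
  have "q \<in> landings r (insert_loop r Q g b) k"
    if "1 \<le> j" "j \<le> r + 2" "ins_word ! (j - 1) = N" "walk r (pcell r Q ins_time) ins_word j = (q, k)"
    for j q k
    using that insertion_point(1) length_insert_loop insert_loop_nth[of "ins_time + j"]
      pcell_insert_loop[of "ins_time + j"]
    by (intro landingsI[of "ins_time + j"]) auto
  then show "g \<in> landings r (insert_loop r Q g b) 0" "b \<in> landings r (insert_loop r Q g b) 1"
    using loop_word_from_lands[OF admissibleD(3,4) insertion_point(2)] by blast+
qed

lemma min_landing_insert_loop: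
  "min_landing r (insert_loop r Q g b) 0 = g" "min_landing r (insert_loop r Q g b) 1 = b"
proof -
  have "g \<le> q" if "q \<in> landings r (insert_loop r Q g b) 0" for q
    using landings_insert_loop[OF that] min_landing_le[OF closed] admissibleD(1) by fastforce
  moreover have "b \<le> q" if "q \<in> landings r (insert_loop r Q g b) 1" for q
    using landings_insert_loop[OF that] min_landing_le[OF closed] admissibleD(2) by fastforce
  ultimately show "min_landing r (insert_loop r Q g b) 0 = g" "min_landing r (insert_loop r Q g b) 1 = b"
    unfolding min_landing_def using loop_landings_insert_loop
    by (auto intro!: Min_eqI finite_landings)
qed

lemma last_visit_insert_loop: "last_visit r (insert_loop r Q g b) g b = ins_time + (r + 2)"
proof (rule last_visit_eqI)
  show "ins_time + (r + 2) \<le> length (insert_loop r Q g b)"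
    using length_insert_loop insertion_point(1) by simp
  show "in_loop r g b (pcell r (insert_loop r Q g b) (ins_time + (r + 2)))"
    using pcell_insert_loop[of "ins_time + (r + 2)"] ins_word_closed length_ins_word insertion_point(2)
    by simp
  fix j
  assume "j \<le> length (insert_loop r Q g b)" "ins_time + (r + 2) < j"
  then show "\<not> in_loop r g b (pcell r (insert_loop r Q g b) j)"
    using pcell_insert_loop[of j] insertion_point(3)[of "j - (r + 2)"] length_insert_loop by simp
qed

lemma remove_insert_loop: "remove_loop r (insert_loop r Q g b) = (Q, (g, b))"
proof -
  have "take ins_time (insert_loop r Q g b) @ drop (ins_time + (r + 2)) (insert_loop r Q g b) = Q"
    unfolding insert_loop_def insert_at_def using insertion_point(1) length_ins_word by simp
  then show ?thesis
    unfolding remove_loop_def Let_def min_landing_insert_loop last_visit_insert_loop by simp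
qed

end


section \<open>Removing the minimal loop\<close>

text \<open>In a valid closed walk with minimal landings \<open>u\<close> and \<open>v\<close>, every cell of the loop \<open>(u, v)\<close>
  except \<open>(v,0)\<close> and \<open>(u+r,1)\<close> must be left by an \<open>E\<close>-step: an \<open>N\<close>-step would land left of \<open>v\<close>
  or \<open>u\<close>. So inside the loop the walk follows the loop word.\<close>

locale valid_closed_walk =
  fixes r :: nat and P :: "step list"
  assumes valid: "valid_walk r P" and closed: "closed_walk r P"
begin

abbreviation "u \<equiv> min_landing r P 0"
abbreviation "v \<equiv> min_landing r P 1"
abbreviation "c \<equiv> pcell r P"
abbreviation "in_min_loop \<equiv> in_loop r u v"

lemma uv_bounds: "u \<le> v" "v \<le> u + int r"
  using min_landing_bounds[OF closed] by auto

lemma end_cell: "c (length P) = (0, 0)"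
  using closed by (simp add: closed_walk_def)

lemma length_pos: "0 < length P"
  using closed by (auto simp: closed_walk_def)

lemma forced_E_row0: "i < length P \<Longrightarrow> c i = (p, 0) \<Longrightarrow> p < v \<Longrightarrow> P ! i = E"
proof (rule ccontr)
  assume i: "i < length P" "c i = (p, 0)" "p < v" "P ! i \<noteq> E"
  then have "P ! i = N" using step_E_or_N by auto
  moreover from this have "c (Suc i) = (p, 1)" using i by (simp add: walk_Suc)
  ultimately have "p \<in> landings r P 1" using i by (intro landingsI[of "Suc i"]) auto
  then show False using min_landing_le[OF closed] i by fastforce
qed

lemma forced_E_row1: "i < length P \<Longrightarrow> c i = (p, 1) \<Longrightarrow> p < u + int r \<Longrightarrow> P ! i = E"
proof (rule ccontr)
  assume i: "i < length P" "c i = (p, 1)" "p < u + int r" "P ! i \<noteq> E"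
  then have "P ! i = N" using step_E_or_N by auto
  moreover from this have "c (Suc i) = (p - int r, 0)" using i by (simp add: walk_Suc)
  ultimately have "p - int r \<in> landings r P 0" using i by (intro landingsI[of "Suc i"]) auto
  then show False using min_landing_le[OF closed] i by fastforce
qed

lemma row1_before_end: "c i = (p, 1) \<Longrightarrow> i \<le> length P \<Longrightarrow> i < length P"
  using end_cell by (cases "i = length P") auto

lemma run_row0:
  "c i = (p, 0) \<Longrightarrow> p + int k \<le> v \<Longrightarrow> i + k \<le> length P \<Longrightarrow>
   c (i + k) = (p + int k, 0) \<and> (0 < k \<longrightarrow> P ! (i + k - 1) = E)"
proof (induct k)
  case (Suc k)
  then have IH: "c (i + k) = (p + int k, 0)" and lt: "i + k < length P" by simp_all
  have "P ! (i + k) = E" using forced_E_row0[OF lt IH] Suc by simp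
  then show ?case using IH lt by (simp add: walk_Suc)
qed simp

lemma run_row0_end:
  assumes "c i = (p, 0)" "i \<le> length P" "p + int k \<le> v" "length P < i + k"
  shows "p + int (length P - i) = 0"
  using run_row0[OF assms(1), of "length P - i"] assms end_cell by simp

lemma run_row1:
  "c i = (p, 1) \<Longrightarrow> i \<le> length P \<Longrightarrow> p + int k \<le> u + int r \<Longrightarrow>
   i + k < length P \<and> c (i + k) = (p + int k, 1) \<and> (0 < k \<longrightarrow> P ! (i + k - 1) = E)"
proof (induct k)
  case 0
  then show ?case using row1_before_end by simp
next
  case (Suc k)
  then have IH: "c (i + k) = (p + int k, 1)" "i + k < length P" by auto
  have "P ! (i + k) = E" using forced_E_row1[OF IH(2,1)] Suc by simp
  moreover from this have "c (Suc (i + k)) = (p + int k + 1, 1)" using IH by (simp add: walk_Suc)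
  moreover from this have "Suc (i + k) < length P" using row1_before_end IH by simp
  ultimately show ?case by simp
qed

lemma turn_row0:
  "i < length P \<Longrightarrow> c i = (v, 0) \<Longrightarrow> in_min_loop (c (Suc i)) \<Longrightarrow> c (Suc i) = (v, 1)"
  using step_E_or_N[of "P ! i"] by (auto simp: walk_Suc in_loop_def)

lemma turn_row1:
  "i < length P \<Longrightarrow> c i = (u + int r, 1) \<Longrightarrow> in_min_loop (c (Suc i)) \<Longrightarrow> c (Suc i) = (u, 0)"
  using step_E_or_N[of "P ! i"] by (auto simp: walk_Suc in_loop_def)

lemma step_in_min_loop:
  assumes j: "j < length P" "in_min_loop (c j)" "in_min_loop (c (Suc j))"
  shows "P ! j = loop_step r u v (c j)"
proof -
  obtain x y where xy: "c j = (x, y)" by (cases "c j")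
  have "y = 0 \<or> y = 1" using pcell_row[of r P j] xy by simp
  moreover have "P ! j = N" if "x = v \<and> y = 0 \<or> x = u + int r \<and> y = 1"
    using that j xy step_E_or_N[of "P ! j"] uv_bounds by (auto simp: walk_Suc)
  ultimately show ?thesis
    using j xy forced_E_row0[OF j(1)] forced_E_row1[OF j(1)]
    by (auto simp: loop_step_def in_loop_def)
qed

lemma landing_u: obtains i where "1 \<le> i" "i \<le> length P" "P ! (i - 1) = N" "c i = (u, 0)"
  using min_landing_mem[OF closed, of 0] by (auto elim: landingsE)

lemma landing_v: obtains i where "1 \<le> i" "i \<le> length P" "P ! (i - 1) = N" "c i = (v, 1)"
  using min_landing_mem[OF closed, of 1] by (auto elim: landingsE)

lemma no_N_reentry:
  "1 \<le> i \<Longrightarrow> i < j \<Longrightarrow> j \<le> length P \<Longrightarrow> P ! (i - 1) = E \<Longrightarrow> c j = c i \<Longrightarrow> P ! (j - 1) \<noteq> N"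
  using valid unfolding valid_walk_def by fastforce

lemma row0_run_before:
  assumes x: "c x = (p, 0)" "p + int K \<le> v"
    and \<tau>: "x < \<tau>" "\<tau> \<le> length P" "snd (c \<tau>) = 1 \<or> fst (c \<tau>) \<le> p"
  shows "x + K < \<tau> \<and> c (x + K) = (p + int K, 0)"
proof -
  have "x + K < \<tau>"
  proof (rule ccontr)
    assume "\<not> x + K < \<tau>"
    then have "c (x + (\<tau> - x)) = (p + int (\<tau> - x), 0)"
      using run_row0[OF x(1), of "\<tau> - x"] x(2) \<tau>(1,2) by simp
    then show False using \<tau> by simp
  qed
  then show ?thesis using run_row0[OF x] \<tau>(2) by simp
qed

lemma row1_run_before:
  assumes x: "c x = (p, 1)" "p + int K \<le> u + int r"
    and \<tau>: "x < \<tau>" "\<tau> \<le> length P" "snd (c \<tau>) = 0 \<or> fst (c \<tau>) \<le> p"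
  shows "x + K < \<tau> \<and> c (x + K) = (p + int K, 1)"
proof -
  have "x + K < \<tau>"
  proof (rule ccontr)
    assume "\<not> x + K < \<tau>"
    then have "c (x + (\<tau> - x)) = (p + int (\<tau> - x), 1)"
      using run_row1[OF x(1), of "\<tau> - x"] x(2) \<tau>(1,2) by simp
    then show False using \<tau> by simp
  qed
  then show ?thesis using run_row1[OF x(1)] x(2) \<tau>(1,2) by simp
qed

definition last_in :: nat where
  "last_in = last_visit r P u v"

definition run_start :: nat where
  "run_start = Min {x. x \<le> last_in \<and> (\<forall>j. x \<le> j \<and> j \<le> last_in \<longrightarrow> in_min_loop (c j))}"

lemma min_loop_visited: "\<exists>i \<le> length P. in_min_loop (c i)"
  using landing_u uv_bounds by (metis in_loop_row0 order_refl)

lemma last_in: "last_in \<le> length P" "in_min_loop (c last_in)"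
  using last_visit_mem[OF min_loop_visited] by (simp_all add: last_in_def)

lemma last_in_ge: "j \<le> length P \<Longrightarrow> in_min_loop (c j) \<Longrightarrow> j \<le> last_in"
  using last_visit_ge[OF min_loop_visited] by (simp add: last_in_def)

lemma run_start:
  "run_start \<le> last_in" "\<And>j. run_start \<le> j \<Longrightarrow> j \<le> last_in \<Longrightarrow> in_min_loop (c j)"
  "\<And>x. x \<le> last_in \<Longrightarrow> (\<And>j. x \<le> j \<Longrightarrow> j \<le> last_in \<Longrightarrow> in_min_loop (c j)) \<Longrightarrow> run_start \<le> x"
proof -
  let ?S = "{x. x \<le> last_in \<and> (\<forall>j. x \<le> j \<and> j \<le> last_in \<longrightarrow> in_min_loop (c j))}"
  have fin: "finite ?S" by (rule finite_subset[of _ "{..last_in}"]) auto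
  have "last_in \<in> ?S" using last_in by auto
  then have "run_start \<in> ?S" unfolding run_start_def using Min_in[OF fin] by blast
  then show "run_start \<le> last_in" "\<And>j. run_start \<le> j \<Longrightarrow> j \<le> last_in \<Longrightarrow> in_min_loop (c j)"
    by auto
  show "run_start \<le> x"
    if "x \<le> last_in" "\<And>j. x \<le> j \<Longrightarrow> j \<le> last_in \<Longrightarrow> in_min_loop (c j)" for x
    unfolding run_start_def using that by (intro Min_le[OF fin]) auto
qed

lemma before_run_start: "0 < run_start \<Longrightarrow> \<not> in_min_loop (c (run_start - 1))"
proof
  assume "0 < run_start" and "in_min_loop (c (run_start - 1))"
  moreover have "in_min_loop (c j)" if "run_start - 1 \<le> j" "j \<le> last_in" for j
    using that calculation run_start(2)[of j] by (cases "j = run_start - 1") auto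
  ultimately have "run_start \<le> run_start - 1"
    using run_start(1) by (intro run_start(3)) auto
  then show False using \<open>0 < run_start\<close> by simp
qed

text \<open>From a cell of the last stretch, the walk follows the loop until it passes a later visit
  \<open>\<tau>\<close> of a corner cell; as \<open>\<tau> \<le> last_in\<close>, the whole loop is traversed before \<open>last_in\<close>,
  unless the walk ends on the final row-\<open>0\<close> run, which needs \<open>0 < p\<close>.\<close>

lemma loop_from_row0:
  assumes x: "run_start \<le> x" "c x = (p, 0)" "u \<le> p" "p \<le> v"
    and \<tau>: "x < \<tau>" "\<tau> \<le> length P" "c \<tau> = (u, 0)"
  shows "x + (r + 2) \<le> last_in \<or> 0 < p"
proof -
  have stay: "in_min_loop (c j)" if "x \<le> j" "j \<le> \<tau>" for j
    using run_start(2) x(1) that last_in_ge[OF \<tau>(2)] \<tau>(3) uv_bounds by fastforce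
  define K0 K1 K2 where "K0 = nat (v - p)" and "K1 = nat (u + int r - v)" and "K2 = nat (p - u)"
  have K: "int K0 = v - p" "int K1 = u + int r - v" "int K2 = p - u"
    using x uv_bounds by (simp_all add: K0_def K1_def K2_def)
  have t0: "x + K0 < \<tau>" "c (x + K0) = (v, 0)"
    using row0_run_before[OF x(2), of K0] K x \<tau> by auto
  then have c1: "c (x + K0 + 1) = (v, 1)" using turn_row0 stay \<tau>(2) by simp
  then have "x + K0 + 1 < \<tau>" using t0(1) \<tau>(3) by (cases "x + K0 + 1 = \<tau>") auto
  with c1 have t1: "x + K0 + 1 + K1 < \<tau>" "c (x + K0 + 1 + K1) = (u + int r, 1)"
    using row1_run_before[of "x + K0 + 1" v K1] K t0 \<tau> by auto
  then have t2: "c (x + K0 + K1 + 2) = (u, 0)"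
    using turn_row1[of "x + K0 + 1 + K1"] stay[of "x + K0 + K1 + 2"] \<tau>(2) by simp
  have T: "x + K0 + K1 + 2 + K2 = x + (r + 2)" using K by linarith
  show ?thesis
  proof (cases "x + (r + 2) \<le> length P")
    case True
    then have "x + K0 + K1 + 2 + K2 \<le> length P" using T by simp
    then have "c (x + K0 + K1 + 2 + K2) = (p, 0)" using run_row0[OF t2, of K2] K x by simp
    then show ?thesis using last_in_ge[OF True] x unfolding T by simp
  next
    case False
    have "x + K0 + K1 + 2 \<le> length P" using t1(1) \<tau>(2) by simp
    moreover from this have "u + int (length P - (x + K0 + K1 + 2)) = 0"
      using run_row0_end[OF t2, of K2] K x T False by simp
    ultimately show ?thesis using False K T by (simp add: of_nat_diff)
  qed
qed

lemma loop_from_row1: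
  assumes x: "run_start \<le> x" "c x = (p, 1)" "v \<le> p" "p \<le> u + int r"
    and \<tau>: "x < \<tau>" "\<tau> \<le> length P" "c \<tau> = (v, 1)"
  shows "x + (r + 2) \<le> last_in"
proof -
  have stay: "in_min_loop (c j)" if "x \<le> j" "j \<le> \<tau>" for j
    using run_start(2) x(1) that last_in_ge[OF \<tau>(2)] \<tau>(3) uv_bounds by fastforce
  define K0 K1 K2 where "K0 = nat (u + int r - p)" and "K1 = nat (v - u)" and "K2 = nat (p - v)"
  have K: "int K0 = u + int r - p" "int K1 = v - u" "int K2 = p - v"
    using x uv_bounds by (simp_all add: K0_def K1_def K2_def)
  have t0: "x + K0 < \<tau>" "c (x + K0) = (u + int r, 1)"
    using row1_run_before[OF x(2), of K0] K x \<tau> by auto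
  then have c1: "c (x + K0 + 1) = (u, 0)" using turn_row1 stay \<tau>(2) by simp
  then have "x + K0 + 1 < \<tau>" using t0(1) \<tau>(3) by (cases "x + K0 + 1 = \<tau>") auto
  with c1 have t1: "x + K0 + 1 + K1 < \<tau>" "c (x + K0 + 1 + K1) = (v, 0)"
    using row0_run_before[of "x + K0 + 1" u K1] K t0 \<tau> by auto
  then have t2: "c (x + K0 + K1 + 2) = (v, 1)"
    using turn_row0[of "x + K0 + 1 + K1"] stay[of "x + K0 + K1 + 2"] \<tau>(2) by simp
  have T: "x + K0 + K1 + 2 + K2 = x + (r + 2)" using K by linarith
  have "x + K0 + K1 + 2 + K2 < length P" "c (x + K0 + K1 + 2 + K2) = (p, 1)"
    using run_row1[OF t2, of K2] K x t1 \<tau>(2) by auto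
  then show ?thesis using last_in_ge x unfolding T by simp
qed

text \<open>If the walk entered the cell at \<open>run_start\<close> already earlier, by an \<open>E\<close>-run inside the
  loop, then either that run covers \<open>run_start - 1\<close> or the cell is entered by \<open>E\<close> and then by \<open>N\<close>.\<close>

lemma row0_run_misses_start:
  assumes e: "0 < run_start" "c run_start = (p, 0)" "P ! (run_start - 1) = N"
    and x: "x < run_start" "c x = (q, 0)" "u \<le> q" "q < p" "p \<le> v" "x + nat (p - q) \<le> length P"
  shows False
proof -
  define K where "K = nat (p - q)"
  have K: "int K = p - q" "0 < K" using x by (auto simp: K_def)
  have run: "c (x + K) = (p, 0)" "P ! (x + K - 1) = E"
    using run_row0[OF x(2), of K] K x K_def by auto
  show False
  proof (cases "run_start \<le> x + K")
    case True
    then have "c (x + (run_start - 1 - x)) = (q + int (run_start - 1 - x), 0)"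
      using run_row0[OF x(2), of "run_start - 1 - x"] K x by simp
    moreover have "q + int (run_start - 1 - x) < p" using True K x by linarith
    ultimately have "in_min_loop (c (run_start - 1))" using x by simp
    then show False using before_run_start e(1) by simp
  next
    case False
    then show False
      using no_N_reentry[of "x + K" run_start] run e K last_in(1) run_start(1) by simp
  qed
qed

lemma row1_run_misses_start:
  assumes e: "0 < run_start" "c run_start = (p, 1)" "P ! (run_start - 1) = N"
    and x: "x < run_start" "c x = (q, 1)" "v \<le> q" "q < p" "p \<le> u + int r"
  shows False
proof -
  define K where "K = nat (p - q)"
  have K: "int K = p - q" "0 < K" using x by (auto simp: K_def)
  have "x \<le> length P" using x(1) run_start(1) last_in(1) by simp
  then have run: "c (x + K) = (p, 1)" "P ! (x + K - 1) = E"
    using run_row1[OF x(2), of K] K x by auto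
  show False
  proof (cases "run_start \<le> x + K")
    case True
    then have "c (x + (run_start - 1 - x)) = (q + int (run_start - 1 - x), 1)"
      using run_row1[OF x(2) \<open>x \<le> length P\<close>, of "run_start - 1 - x"] K x by simp
    moreover have "q + int (run_start - 1 - x) < p" using True K x by linarith
    ultimately have "in_min_loop (c (run_start - 1))" using x by simp
    then show False using before_run_start e(1) by simp
  next
    case False
    then show False
      using no_N_reentry[of "x + K" run_start] run e K last_in(1) run_start(1) by simp
  qed
qed

lemma long_run_from_zero: "run_start = 0 \<Longrightarrow> r + 2 \<le> last_in"
proof -
  assume e: "run_start = 0"
  then have "u \<le> 0" "0 \<le> v" using run_start(2)[of 0] by simp_all
  obtain \<tau> where "1 \<le> \<tau>" "\<tau> \<le> length P" "c \<tau> = (u, 0)" by (rule landing_u)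
  then show ?thesis using loop_from_row0[of 0 0 \<tau>] e \<open>u \<le> 0\<close> \<open>0 \<le> v\<close> by simp
qed

lemma long_run_from_row0:
  assumes e: "0 < run_start" "c run_start = (p, 0)" "u < p" "p \<le> v" "P ! (run_start - 1) = N"
  shows "run_start + (r + 2) \<le> last_in"
proof -
  obtain \<tau> where \<tau>: "1 \<le> \<tau>" "\<tau> \<le> length P" "c \<tau> = (u, 0)" by (rule landing_u)
  have "\<not> \<tau> < run_start"
  proof
    assume \<tau>e: "\<tau> < run_start"
    show False
    proof (cases "\<tau> + nat (p - u) \<le> length P")
      case True
      then show False using row0_run_misses_start[OF e(1,2,5) \<tau>e \<tau>(3)] e by simp
    next
      case False
      have inside: "in_min_loop (c j)" if "\<tau> \<le> j" "j \<le> length P" for j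
      proof -
        have "c (\<tau> + (j - \<tau>)) = (u + int (j - \<tau>), 0)"
          using run_row0[OF \<tau>(3), of "j - \<tau>"] that False e by simp
        moreover have "u + int (j - \<tau>) \<le> v" using that False e by linarith
        ultimately show ?thesis using that by simp
      qed
      then have "length P \<le> last_in" using last_in_ge[of "length P"] \<tau>(2) by simp
      then have "run_start \<le> \<tau>" using inside last_in(1) \<tau>(2) by (intro run_start(3)) auto
      then show False using \<tau>e by simp
    qed
  qed
  moreover have "\<tau> \<noteq> run_start" using \<tau> e by auto
  ultimately have "run_start < \<tau>" by simp
  with loop_from_row0[OF le_refl e(2)] e \<tau>
  have "run_start + (r + 2) \<le> last_in \<or> 0 < p" by simp
  moreover have False if "0 < p"
  proof -
    have "p \<le> int (length P)"
      using run_row0_end[of 0 0 "nat p"] e that length_pos by fastforce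
    then have "0 + nat (p - 0) \<le> length P" by simp
    then show False
      using row0_run_misses_start[OF e(1,2,5), of 0 0] e that min_landing_0_le_0[OF closed] by simp
  qed
  ultimately show ?thesis by blast
qed

lemma long_run_from_row1:
  assumes e: "0 < run_start" "c run_start = (p, 1)" "v < p" "p \<le> u + int r" "P ! (run_start - 1) = N"
  shows "run_start + (r + 2) \<le> last_in"
proof -
  obtain \<tau> where \<tau>: "1 \<le> \<tau>" "\<tau> \<le> length P" "c \<tau> = (v, 1)" by (rule landing_v)
  have "\<not> \<tau> < run_start" using row1_run_misses_start[OF e(1,2,5) _ \<tau>(3)] e by auto
  moreover have "\<tau> \<noteq> run_start" using \<tau> e by auto
  ultimately have "run_start < \<tau>" by simp
  then show ?thesis using loop_from_row1[OF le_refl e(2) _ e(4) _ \<tau>(2,3)] e(3) by simp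
qed

text \<open>The stretch cannot be entered by an \<open>E\<close>-step: it would come from \<open>(u - 1, 0)\<close> or \<open>(v - 1, 1)\<close>,
  left of the minimal landings.\<close>

lemma long_last_run: "run_start + (r + 2) \<le> last_in"
proof (cases "run_start = 0")
  case True
  then show ?thesis using long_run_from_zero by simp
next
  case False
  let ?e = "run_start"
  have e: "1 \<le> ?e" "?e \<le> length P" using False run_start(1) last_in(1) by auto
  have out: "\<not> in_min_loop (c (?e - 1))" using before_run_start False by simp
  have inside: "in_min_loop (c ?e)" using run_start by simp
  obtain x y where xy: "c (?e - 1) = (x, y)" by (cases "c (?e - 1)")
  have y: "y = 0 \<or> y = 1" using pcell_row[of r P "?e - 1"] xy by simp
  have x: "y = 0 \<Longrightarrow> u \<le> x" "y = 1 \<Longrightarrow> v \<le> x"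
    using visited_row0_ge[OF closed, of "?e - 1"] visited_row1_ge[OF closed, of "?e - 1"] xy e by auto
  have step: "c ?e = move r (x, y) (P ! (?e - 1))" using pcell_step[OF e] xy by simp
  show ?thesis
  proof (cases "P ! (?e - 1)")
    case E
    then show ?thesis using step inside out x y xy by auto
  next
    case N
    show ?thesis
    proof (cases "y = 0")
      case True
      then have "c ?e = (x, 1)" using step N by simp
      then show ?thesis
        using long_run_from_row1[of x] inside out x xy True False N uv_bounds by simp
    next
      case False
      then have "y = 1" "c ?e = (x - int r, 0)" using step N y by simp_all
      then show ?thesis
        using long_run_from_row0[of "x - int r"] inside out x xy \<open>run_start \<noteq> 0\<close> N by simp
    qed
  qed
qed

definition loop_start :: nat where
  "loop_start = last_in - (r + 2)"

definition reduced :: "step list" where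
  "reduced = take loop_start P @ drop last_in P"

abbreviation "c0 \<equiv> c loop_start"

lemma window:
  "loop_start + (r + 2) = last_in" "\<And>j. loop_start \<le> j \<Longrightarrow> j \<le> last_in \<Longrightarrow> in_min_loop (c j)"
  using long_last_run run_start(2) by (auto simp: loop_start_def)

lemma window_cells:
  "k \<le> r + 2 \<Longrightarrow> c (loop_start + k) = loop_cell u v ((loop_index u v c0 + k) mod (r + 2))"
proof (induct k)
  case 0
  then show ?case using window loop_cell_loop_index[OF uv_bounds] by simp
next
  case (Suc k)
  let ?j = "loop_start + k"
  have j: "?j < length P" "in_min_loop (c ?j)" "in_min_loop (c (Suc ?j))"
    using Suc.prems window last_in(1) by auto
  have "c (Suc ?j) = move r (c ?j) (loop_step r u v (c ?j))"
    using walk_Suc[OF j(1)] step_in_min_loop[OF j] by simp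
  also have "\<dots> = loop_cell u v (Suc (loop_index u v (c ?j)) mod (r + 2))"
    using move_loop_step[OF uv_bounds j(2)] .
  also have "loop_index u v (c ?j) = (loop_index u v c0 + k) mod (r + 2)"
    using Suc loop_index_loop_cell[OF uv_bounds] by simp
  finally show ?case by (simp add: mod_Suc_eq)
qed

lemma window_word: "take (r + 2) (drop loop_start P) = loop_word_from r u v c0"
proof (rule nth_equalityI)
  show "length (take (r + 2) (drop loop_start P)) = length (loop_word_from r u v c0)"
    using length_loop_word_from[OF uv_bounds] window(1) last_in(1) by simp
  fix k
  assume "k < length (take (r + 2) (drop loop_start P))"
  then have k: "k < r + 2" "loop_start + k < length P" by auto
  have j: "in_min_loop (c (loop_start + k))" "in_min_loop (c (Suc (loop_start + k)))"
    using window k by auto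
  have "take (r + 2) (drop loop_start P) ! k = loop_step r u v (c (loop_start + k))"
    using step_in_min_loop[OF k(2) j] k by simp
  also have "\<dots> = loop_word r u v ! ((loop_index u v c0 + k) mod (r + 2))"
    using loop_step_eq_nth[OF uv_bounds j(1)] window_cells[of k] k loop_index_loop_cell[OF uv_bounds]
    by simp
  finally show "take (r + 2) (drop loop_start P) ! k = loop_word_from r u v c0 ! k"
    using loop_word_from_nth[OF uv_bounds k(1)] by simp
qed

lemma length_reduced: "length reduced = length P - (r + 2)" "loop_start \<le> length reduced"
  using window(1) last_in(1) by (auto simp: reduced_def)

lemma pcell_reduced_loop_start: "pcell r reduced loop_start = c0"
  using window(1) last_in(1) by (simp add: reduced_def walk_def)

lemma insert_at_reduced: "insert_at loop_start (loop_word_from r u v c0) reduced = P"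
proof -
  have "take (r + 2) (drop loop_start P) @ drop last_in P = drop loop_start P"
    using window(1) by (metis append_take_drop_id drop_drop add.commute)
  then show ?thesis
    using length_reduced window_word
    by (simp add: insert_at_def reduced_def)
qed

lemma reduced_closed_subwalk:
  "walk r (pcell r reduced loop_start) (loop_word_from r u v c0) (length (loop_word_from r u v c0))
   = pcell r reduced loop_start"
  using walk_loop_word_from_closed[OF uv_bounds] window length_loop_word_from[OF uv_bounds]
    pcell_reduced_loop_start by simp

lemma valid_walk_reduced: "valid_walk r reduced"
  using valid_walk_remove[OF length_reduced(2) reduced_closed_subwalk] valid insert_at_reduced by simp

lemma count_list_reduced: "count_list reduced x + count_list (loop_word_from r u v c0) x = count_list P x"
  using count_list_insert_at[of loop_start "loop_word_from r u v c0" reduced x] insert_at_reduced by simp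

lemma landings_reduced: "landings r reduced k \<subseteq> landings r P k"
proof
  fix q
  assume "q \<in> landings r reduced k"
  then obtain i where i: "1 \<le> i" "i \<le> length reduced" "reduced ! (i - 1) = N" "pcell r reduced i = (q, k)"
    by (rule landingsE)
  let ?L = "length (loop_word_from r u v c0)"
  have "1 \<le> shift_past loop_start ?L i" "shift_past loop_start ?L i \<le> length P"
    using i length_reduced length_loop_word_from[OF uv_bounds] by (auto simp: shift_past_def)
  then show "q \<in> landings r P k"
    using i insert_at_shift_past[OF length_reduced(2) reduced_closed_subwalk]
      pcell_insert_at_shift_past[OF length_reduced(2) reduced_closed_subwalk]
    unfolding insert_at_reduced by (intro landingsI) auto
qed

lemma last_visit_reduced: "last_visit r reduced u v = loop_start"
proof (rule last_visit_eqI)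
  show "loop_start \<le> length reduced" "in_min_loop (pcell r reduced loop_start)"
    using length_reduced window pcell_reduced_loop_start by auto
  fix j
  assume j: "j \<le> length reduced" "loop_start < j"
  have "pcell r reduced j = c (j + (r + 2))"
    using pcell_insert_at_shift_past[OF length_reduced(2) reduced_closed_subwalk, of j] j
      insert_at_reduced length_loop_word_from[OF uv_bounds] by (simp add: shift_past_def)
  moreover have "j + (r + 2) \<le> length P" "last_in < j + (r + 2)" using j length_reduced window by auto
  ultimately show "\<not> in_min_loop (pcell r reduced j)" using last_in_ge[of "j + (r + 2)"] by auto
qed

lemma remove_loop_eq: "remove_loop r P = (reduced, (u, v))"
  by (simp add: remove_loop_def Let_def reduced_def loop_start_def last_in_def)

lemma insert_loop_reduced: "insert_loop r reduced u v = P"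
  unfolding insert_loop_def last_visit_reduced pcell_reduced_loop_start by (rule insert_at_reduced)

lemma admissible_reduced: "closed_walk r reduced \<Longrightarrow> (u, v) \<in> admissible_loops r reduced"
proof -
  assume closed_reduced: "closed_walk r reduced"
  have "u \<le> min_landing r reduced 0" "v \<le> min_landing r reduced 1"
    using min_landing_le[OF closed] landings_reduced min_landing_mem[OF closed_reduced] by blast+
  moreover have "in_min_loop (pcell r reduced loop_start)"
    using window pcell_reduced_loop_start by simp
  ultimately show ?thesis
    unfolding admissible_loops_def using uv_bounds length_reduced(2) by blast
qed

end


section \<open>Counting\<close>

definition le_pairs :: "nat \<Rightarrow> (nat \<times> nat) set" where
  "le_pairs r = {(x, y). x \<le> y \<and> y \<le> r}"

lemma finite_le_pairs: "finite (le_pairs r)"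
  by (rule finite_subset[of _ "{0..r} \<times> {0..r}"]) (auto simp: le_pairs_def)

lemma card_le_pairs: "card (le_pairs r) = (r + 2) choose 2"
proof (induct r)
  case 0
  have "le_pairs 0 = {(0, 0)}" by (auto simp: le_pairs_def)
  then show ?case by (simp add: choose_two)
next
  case (Suc r)
  have "le_pairs (Suc r) = le_pairs r \<union> (\<lambda>x. (x, Suc r)) ` {0..Suc r}"
    by (auto simp: le_pairs_def)
  moreover have "le_pairs r \<inter> (\<lambda>x. (x, Suc r)) ` {0..Suc r} = {}"
    by (auto simp: le_pairs_def)
  moreover have "card ((\<lambda>x. (x, Suc r)) ` {0..Suc r}) = r + 2"
    by (subst card_image) (auto simp: inj_on_def)
  ultimately have "card (le_pairs (Suc r)) = card (le_pairs r) + (r + 2)"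
    using finite_le_pairs by (simp add: card_Un_disjoint)
  then show ?case using Suc by (simp add: choose_two)
qed

definition loop_box :: "nat \<Rightarrow> int \<Rightarrow> int \<Rightarrow> (int \<times> int) set" where
  "loop_box r u v = {(g, b). g \<le> u \<and> b \<le> v \<and> g \<le> b \<and> b \<le> g + int r \<and> (u \<le> b \<or> v \<le> g + int r)}"

text \<open>With \<open>i = u - g\<close> and \<open>d = v - u\<close>, the column \<open>i\<close> of \<open>loop_box r u v\<close> has \<open>i + d + 1\<close> elements
  if \<open>i \<le> r - d\<close> and \<open>r - i + 1\<close> otherwise; these columns become the rows \<open>y = i + d\<close>, respectively
  \<open>y = r - i\<close>, of \<open>le_pairs r\<close>.\<close>

definition box_to_pairs :: "nat \<Rightarrow> int \<Rightarrow> int \<Rightarrow> int \<times> int \<Rightarrow> nat \<times> nat" where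
  "box_to_pairs r u v = (\<lambda>(g, b).
     if u - g \<le> int r - (v - u) then (nat (b - g), nat ((v - u) + (u - g)))
     else (nat (b - u), nat (int r - (u - g))))"

definition pairs_to_box :: "nat \<Rightarrow> int \<Rightarrow> int \<Rightarrow> nat \<times> nat \<Rightarrow> int \<times> int" where
  "pairs_to_box r u v = (\<lambda>(x, y).
     if v - u \<le> int y then (u - (int y - (v - u)), u - (int y - (v - u)) + int x)
     else (u - (int r - int y), u + int x))"

lemma bij_betw_box_to_pairs:
  assumes uv: "u \<le> v" "v \<le> u + int r"
  shows "bij_betw (box_to_pairs r u v) (loop_box r u v) (le_pairs r)"
proof (rule bij_betw_byWitness[where f' = "pairs_to_box r u v"])
  show "\<forall>a\<in>loop_box r u v. pairs_to_box r u v (box_to_pairs r u v a) = a"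
    using uv by (auto simp: loop_box_def box_to_pairs_def pairs_to_box_def)
  show "\<forall>a\<in>le_pairs r. box_to_pairs r u v (pairs_to_box r u v a) = a"
    using uv by (auto simp: le_pairs_def box_to_pairs_def pairs_to_box_def)
  show "box_to_pairs r u v ` loop_box r u v \<subseteq> le_pairs r"
    using uv by (auto simp: loop_box_def box_to_pairs_def le_pairs_def split: if_splits)
  show "pairs_to_box r u v ` le_pairs r \<subseteq> loop_box r u v"
    using uv by (auto simp: loop_box_def pairs_to_box_def le_pairs_def split: if_splits)
qed

lemma admissible_loops_eq_loop_box:
  assumes closed: "closed_walk r Q"
  shows "admissible_loops r Q = loop_box r (min_landing r Q 0) (min_landing r Q 1)"
proof -
  let ?u = "min_landing r Q 0" and ?v = "min_landing r Q 1"
  have "(\<exists>i \<le> length Q. in_loop r g b (pcell r Q i)) \<longleftrightarrow> ?u \<le> b \<or> ?v \<le> g + int r"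
    if "g \<le> ?u" "b \<le> ?v" for g b
  proof
    assume "\<exists>i \<le> length Q. in_loop r g b (pcell r Q i)"
    then obtain i where i: "i \<le> length Q" "in_loop r g b (pcell r Q i)" by blast
    then show "?u \<le> b \<or> ?v \<le> g + int r"
      using pcell_row[of r Q i] visited_row0_ge[OF closed i(1)] visited_row1_ge[OF closed i(1)]
      by (cases "pcell r Q i") (auto simp: in_loop_def)
  next
    assume "?u \<le> b \<or> ?v \<le> g + int r"
    moreover obtain i where "i \<le> length Q" "pcell r Q i = (?u, 0)"
      using min_landing_mem[OF closed, of 0] by (auto elim: landingsE)
    moreover obtain j where "j \<le> length Q" "pcell r Q j = (?v, 1)"
      using min_landing_mem[OF closed, of 1] by (auto elim: landingsE)
    ultimately show "\<exists>i \<le> length Q. in_loop r g b (pcell r Q i)"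
      using that by (metis in_loop_row0 in_loop_row1)
  qed
  then show ?thesis
    unfolding admissible_loops_def loop_box_def by auto
qed

lemma card_admissible_loops:
  assumes "closed_walk r Q"
  shows "finite (admissible_loops r Q)" "card (admissible_loops r Q) = (r + 2) choose 2"
  using bij_betw_box_to_pairs[OF min_landing_bounds[OF assms]] finite_le_pairs card_le_pairs
    admissible_loops_eq_loop_box[OF assms]
  by (metis bij_betw_finite, metis bij_betw_same_card)

definition prefixed_walks :: "nat \<Rightarrow> nat \<Rightarrow> nat \<Rightarrow> step list set" where
  "prefixed_walks r m a = {ps \<in> valid_walks r m. take (a + 1) ps = replicate a E @ [N]}"

lemma finite_prefixed_walks: "finite (prefixed_walks r m a)"
proof (rule finite_subset)
  show "prefixed_walks r m a \<subseteq> {xs. set xs \<subseteq> UNIV \<and> length xs = m * r + 2 * m}"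
  proof
    fix xs
    assume "xs \<in> prefixed_walks r m a"
    then show "xs \<in> {xs. set xs \<subseteq> UNIV \<and> length xs = m * r + 2 * m}"
      using count_list_E_plus_N[of xs] by (simp add: prefixed_walks_def valid_walks_def)
  qed
  show "finite {xs. set xs \<subseteq> (UNIV :: step set) \<and> length xs = m * r + 2 * m}"
    by (rule finite_lists_length_eq) (simp add: UNIV_step)
qed

lemma take_EN_iff:
  assumes same: "take t P = take t Q" and N: "1 \<le> i" "i \<le> t" "Q ! (i - 1) = N"
    and t: "t \<le> length Q" "t \<le> length P"
  shows "take (a + 1) P = replicate a E @ [N] \<longleftrightarrow> take (a + 1) Q = replicate a E @ [N]"
proof (cases "a + 1 \<le> t")
  case True
  then show ?thesis by (metis same min.absorb1 take_take)
next
  case False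
  have "P ! (i - 1) = N" using same N by (metis nth_take diff_less less_le_trans zero_less_one)
  moreover have "take (a + 1) X \<noteq> replicate a E @ [N]" if "X ! (i - 1) = N" for X
  proof
    assume h: "take (a + 1) X = replicate a E @ [N]"
    have "i - 1 < a" using False N by simp
    then have "take (a + 1) X ! (i - 1) = E" unfolding h by (simp add: nth_append)
    then show False using that \<open>i - 1 < a\<close> by simp
  qed
  ultimately show ?thesis using N by blast
qed

lemma insert_loop_prefixed:
  assumes Q: "Q \<in> prefixed_walks r m a" "m \<ge> 1" and gb: "(g, b) \<in> admissible_loops r Q"
  shows "insert_loop r Q g b \<in> prefixed_walks r (Suc m) a"
proof -
  have valid: "valid_walk r Q" and closed: "closed_walk r Q"
    using Q valid_walks_closed by (auto simp: prefixed_walks_def valid_walks_def)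
  obtain i where i: "1 \<le> i" "i \<le> last_visit r Q g b" "Q ! (i - 1) = N"
    using N_before_insertion[OF valid closed gb] by blast
  have "take (a + 1) (insert_loop r Q g b) = replicate a E @ [N]"
    using take_EN_iff[OF take_insert_loop[OF valid closed gb] i] Q
      insertion_point(1)[OF valid closed gb] length_insert_loop[OF valid closed gb]
    by (simp add: prefixed_walks_def)
  then show ?thesis
    using Q valid_walk_insert_loop[OF valid closed gb] count_list_insert_loop[OF valid closed gb]
    by (simp add: prefixed_walks_def valid_walks_def)
qed

lemma remove_loop_prefixed:
  assumes P: "P \<in> prefixed_walks r (Suc m) a" and m: "m \<ge> 1"
  shows "remove_loop r P \<in> (SIGMA Q:prefixed_walks r m a. admissible_loops r Q)"
    and "(\<lambda>(Q, g, b). insert_loop r Q g b) (remove_loop r P) = P"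
proof -
  have "valid_walk r P" "closed_walk r P"
    using P valid_walks_closed[of P r "Suc m"] by (auto simp: prefixed_walks_def valid_walks_def)
  then interpret valid_closed_walk r P by unfold_locales
  have counts: "count_list P E = Suc m * r" "count_list P N = 2 * Suc m"
    using P by (auto simp: prefixed_walks_def valid_walks_def)
  have "reduced \<in> valid_walks r m"
    using valid_walk_reduced count_list_reduced[of E] count_list_reduced[of N] counts
      count_list_loop_word_from[OF uv_bounds]
    by (simp add: valid_walks_def)
  moreover from this have closed_reduced: "closed_walk r reduced"
    using valid_walks_closed m by blast
  moreover have adm: "(u, v) \<in> admissible_loops r reduced"
    using admissible_reduced[OF closed_reduced] .
  moreover obtain i where "1 \<le> i" "i \<le> loop_start" "reduced ! (i - 1) = N"
    using N_before_insertion[OF valid_walk_reduced closed_reduced adm] last_visit_reduced by auto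
  moreover have "take loop_start P = take loop_start reduced"
    using take_insert_loop[OF valid_walk_reduced closed_reduced adm]
    by (simp add: insert_loop_reduced last_visit_reduced)
  ultimately show "remove_loop r P \<in> (SIGMA Q:prefixed_walks r m a. admissible_loops r Q)"
    using take_EN_iff[of loop_start P reduced] P length_reduced window(1) last_in(1)
    by (auto simp: remove_loop_eq prefixed_walks_def)
  show "(\<lambda>(Q, g, b). insert_loop r Q g b) (remove_loop r P) = P"
    by (simp add: remove_loop_eq insert_loop_reduced)
qed

lemma bij_betw_insert_loop:
  assumes "m \<ge> 1"
  shows "bij_betw (\<lambda>(Q, g, b). insert_loop r Q g b)
    (SIGMA Q:prefixed_walks r m a. admissible_loops r Q) (prefixed_walks r (Suc m) a)"
proof (rule bij_betw_byWitness[where f' = "remove_loop r"])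
  have closed: "closed_walk r Q" and valid: "valid_walk r Q" if "Q \<in> prefixed_walks r m a" for Q
    using that valid_walks_closed assms by (auto simp: prefixed_walks_def valid_walks_def)
  show "\<forall>x\<in>(SIGMA Q:prefixed_walks r m a. admissible_loops r Q).
      remove_loop r ((\<lambda>(Q, g, b). insert_loop r Q g b) x) = x"
    using remove_insert_loop[OF valid closed] by auto
  show "(\<lambda>(Q, g, b). insert_loop r Q g b) ` (SIGMA Q:prefixed_walks r m a. admissible_loops r Q)
      \<subseteq> prefixed_walks r (Suc m) a"
    using insert_loop_prefixed assms by auto
  show "\<forall>y\<in>prefixed_walks r (Suc m) a. (\<lambda>(Q, g, b). insert_loop r Q g b) (remove_loop r y) = y"
    using remove_loop_prefixed(2) assms by blast
  show "remove_loop r ` prefixed_walks r (Suc m) a \<subseteq> (SIGMA Q:prefixed_walks r m a. admissible_loops r Q)"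
    using remove_loop_prefixed(1) assms by blast
qed

lemma card_prefixed_walks_Suc:
  assumes "m \<ge> 1"
  shows "card (prefixed_walks r (Suc m) a) = card (prefixed_walks r m a) * ((r + 2) choose 2)"
proof -
  have closed: "closed_walk r Q" if "Q \<in> prefixed_walks r m a" for Q
    using that valid_walks_closed assms by (auto simp: prefixed_walks_def)
  have "card (prefixed_walks r (Suc m) a) = card (SIGMA Q:prefixed_walks r m a. admissible_loops r Q)"
    using bij_betw_same_card[OF bij_betw_insert_loop[OF assms]] by simp
  also have "\<dots> = (\<Sum>Q\<in>prefixed_walks r m a. card (admissible_loops r Q))"
    using card_admissible_loops(1)[OF closed] by (intro card_SigmaI finite_prefixed_walks) auto
  also have "\<dots> = card (prefixed_walks r m a) * ((r + 2) choose 2)"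
    using card_admissible_loops(2)[OF closed] by simp
  finally show ?thesis .
qed


text \<open>With at most \<open>r\<close> \<open>E\<close>-steps and two \<open>N\<close>-steps, the only equivalent pair of points on a
  path is its start and its end, so the condition is void.\<close>

lemma valid_if_few_steps:
  assumes "count_list ps E \<le> r" "count_list ps N \<le> 2"
  shows "valid r 2 ps"
  unfolding valid_def
proof (intro allI impI)
  fix i j
  assume ij: "1 \<le> i" "i < j" "j \<le> length ps" "ps ! (i - 1) = E" "equiv_pt r 2 (pt ps j) (pt ps i)"
  let ?e = "\<lambda>k. count_list (take k ps) E" and ?n = "\<lambda>k. count_list (take k ps) N"
  obtain l :: int where l: "int (?e j) - int (?e i) = l * int r" "int (?n j) - int (?n i) = l * 2"
    using ij(5) by (auto simp: equiv_pt_def pt_eq_count_list)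
  have mono: "?e i \<le> ?e j" "?n i \<le> ?n j" using count_list_take_mono[of i j ps] ij(2) by simp_all
  have bounds: "?e j \<le> r" "?n j \<le> 2"
    using count_list_take_le[of j ps E] count_list_take_le[of j ps N] assms by linarith+
  have sums: "?e i + ?n i = i" "?e j + ?n j = j"
    using count_list_E_plus_N[of "take i ps"] count_list_E_plus_N[of "take j ps"] ij by auto
  have "l = 0 \<or> l = 1" using l(2) mono(2) bounds(2) by linarith
  then have False
  proof
    assume "l = 0"
    then show False using l sums ij(2) by simp
  next
    assume "l = 1"
    then show False using l mono bounds sums ij(1) by simp
  qed
  then show "ps ! (j - 1) = E" ..
qed

definition single_loop_walk :: "nat \<Rightarrow> nat \<Rightarrow> nat \<Rightarrow> step list" where
  "single_loop_walk r a j = replicate a E @ N # replicate j E @ N # replicate (r - a - j) E"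

lemma split_single_N:
  assumes "count_list xs N = 1"
  obtains j k where "xs = replicate j E @ N # replicate k E"
proof -
  obtain pref rest where xs: "xs = pref @ N # rest" "N \<notin> set pref" "count_list rest N = 0"
    using count_list_Suc_split_first[of xs N 0] assms by auto
  have "pref = replicate (length pref) E" "rest = replicate (length rest) E"
    using xs step_E_or_N by (metis count_list_0_iff replicate_length_same)+
  then show ?thesis using that xs(1) by metis
qed

lemma prefixed_walks_one:
  assumes "a \<le> r"
  shows "prefixed_walks r 1 a = single_loop_walk r a ` {..r - a}"
proof
  show "prefixed_walks r 1 a \<subseteq> single_loop_walk r a ` {..r - a}"
  proof
    fix ps
    assume ps: "ps \<in> prefixed_walks r 1 a"
    then have c: "count_list ps E = r" "count_list ps N = 2" "take (a + 1) ps = replicate a E @ [N]"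
      by (auto simp: prefixed_walks_def valid_walks_def)
    define rest where "rest = drop (a + 1) ps"
    have split: "ps = replicate a E @ N # rest"
      using c(3) unfolding rest_def by (metis append_Cons append_Nil append_assoc append_take_drop_id)
    then have "count_list rest N = 1" "count_list rest E = r - a"
      using c by (auto simp: count_list_replicate)
    obtain j k where rest: "rest = replicate j E @ N # replicate k E"
      using split_single_N[OF \<open>count_list rest N = 1\<close>] .
    then have "k = r - a - j" "j \<le> r - a"
      using \<open>count_list rest E = r - a\<close> by (simp_all add: count_list_replicate)
    then show "ps \<in> single_loop_walk r a ` {..r - a}"
      using split rest by (auto simp: single_loop_walk_def)
  qed
  show "single_loop_walk r a ` {..r - a} \<subseteq> prefixed_walks r 1 a"
  proof
    fix ps
    assume "ps \<in> single_loop_walk r a ` {..r - a}"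
    then have c: "count_list ps E = r" "count_list ps N = 2" "take (a + 1) ps = replicate a E @ [N]"
      using assms by (auto simp: single_loop_walk_def count_list_replicate)
    then have "valid_walk r ps"
      using valid_if_few_steps[of ps r] valid_iff_valid_walk by simp
    then show "ps \<in> prefixed_walks r 1 a" using c by (simp add: prefixed_walks_def valid_walks_def)
  qed
qed

lemma inj_on_single_loop_walk: "inj_on (single_loop_walk r a) {..r - a}"
proof (rule inj_onI)
  fix j j'
  assume "single_loop_walk r a j = single_loop_walk r a j'"
  then have "takeWhile (\<lambda>x. x = E) (drop (a + 1) (single_loop_walk r a j)) =
      takeWhile (\<lambda>x. x = E) (drop (a + 1) (single_loop_walk r a j'))" by simp
  moreover have "takeWhile (\<lambda>x. x = E) (replicate k E @ N # xs) = replicate k E" for k xs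
    by (induct k) auto
  ultimately show "j = j'" by (simp add: single_loop_walk_def)
qed

lemma card_prefixed_walks:
  assumes "a \<le> r" "n \<ge> 1"
  shows "card (prefixed_walks r n a) = (r - a + 1) * ((r + 2) choose 2) ^ (n - 1)"
  using assms(2)
proof (induct n rule: nat_induct_at_least)
  case base
  show ?case
    using prefixed_walks_one[OF assms(1)] card_image[OF inj_on_single_loop_walk] by simp
next
  case (Suc n)
  then show ?case using card_prefixed_walks_Suc[OF Suc(1)] by (cases n) (auto simp: algebra_simps)
qed

theorem mainTheorem5:
  fixes r n a :: nat
  assumes "r > 0" and "n > 0" and "a \<le> r"
  shows "card {ps \<in> valid_paths r 2 (int (n * r), int (2 * n)).
                 take (a + 1) ps = replicate a E @ [N]}
         = (r - a + 1) * ((r + 2) choose 2) ^ (n - 1)"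
proof -
  have "{ps \<in> valid_paths r 2 (int (n * r), int (2 * n)). take (a + 1) ps = replicate a E @ [N]}
      = prefixed_walks r n a"
    unfolding prefixed_walks_def valid_paths_eq_valid_walks ..
  then show ?thesis using card_prefixed_walks[OF assms(3)] assms(2) by simp
qed

end
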